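(* Let $q\ge8$ be even. The $\mathrm{U}\Gamma$-lines (non-tangent unisecants of the twisted cubic $\mathcal{C}$ lying in an osculating plane) form two orbits under $G_q$, of sizes $q+1$ and $q^2-1$, namely $\{\ell_1\varphi:\varphi\in G_q\}$ and $\{\ell_2\varphi:\varphi\in G_q\}$, where $P_0=P(0,0,0,1)$, $\ell_1$ is the line through $P_0$ and $P(0,1,0,0)$, and $\ell_2$ is the line through $P_0$ and $P(0,1,1,0)$. The orbit of size $q+1$ consists of the lines of the regulus complementary to that of the tangents. The subgroup $G_q^{\ell_1}$ of $G_q$ fixing $\ell_1$ has size $q(q-1)$, and each of its elements has a matrix of the form $\begin{pmatrix}1&c&c^2&c^3\\0&d&0&c^2d\\0&0&d^2&cd^2\\0&0&0&d^3\end{pmatrix}$, $c\in\mathbb{F}_q$, $d\in\mathbb{F}_q^*$. The subgroup $G_q^{\ell_2}$ fixing $\ell_2$ has size $q$, and each of its elements has a matrix of the form $\begin{pmatrix}1&c&c^2&c^3\\0&1&0&c^2\\0&0&1&c\\0&0&0&1\end{pmatrix}$, $c\in\mathbb{F}_q$.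
   Context: $\mathrm{PG}(3,q)$ has points $P(x_0,x_1,x_2,x_3)$; $\boldsymbol{\pi}(c_0,c_1,c_2,c_3)$ is the plane $c_0x_0+c_1x_1+c_2x_2+c_3x_3=0$. For $t\in\mathbb{F}_q$ let $P_t=P(t^3,t^2,t,1)$, $P_\infty=P(1,0,0,0)$; the twisted cubic is $\mathcal{C}=\{P_t\}$. The osculating planes are $\pi_{\mathrm{osc}}(t)=\boldsymbol{\pi}(1,-3t,3t^2,-t^3)$ ($t\in\mathbb{F}_q$), $\pi_{\mathrm{osc}}(\infty)=\boldsymbol{\pi}(0,0,0,1)$. The tangent at $P_t$ ($t\in\mathbb{F}_q$) is the line through $P_t$ and $P(3t^2,2t,1,0)$; the tangent at $P_\infty$ is $x_2=x_3=0$. A $\mathrm{U}\Gamma$-line is a line meeting $\mathcal{C}$ in exactly one point, not a tangent, contained in an osculating plane. For $q$ even the $q+1$ tangents form a regulus; the complementary regulus is the opposite family of $q+1$ lines of the same hyperbolic quadric. $G_q$ is the group of projectivities mapping $\mathcal{C}$ to itself; for $q\ge5$ its elements are $x\mapsto xM$ on row vectors, $M=\begin{pmatrix} a^3&a^2c&ac^2&c^3\\ 3a^2b&a^2d+2abc&bc^2+2acd&3c^2d\\ 3ab^2&b^2c+2abd&ad^2+2bcd&3cd^2\\ b^3&b^2d&bd^2&d^3\end{pmatrix}$, $ad-bc\ne0$, up to scalar. *)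

theory Defs
  imports "HOL-Analysis.Analysis"
begin

text \<open>Homogeneous coordinates of PG(3,q): vectors of type 'a^4 over a finite field 'a.
  The coordinates x0,x1,x2,x3 of the paper are the entries 1,2,3,4 of the vector
  (written with vector [x0,x1,x2,x3]).  A point is represented by any nonzero vector;
  a line is represented by its underlying 2-dimensional subspace (a set of vectors).\<close>

definition pt :: "'a::field \<Rightarrow> 'a \<Rightarrow> 'a \<Rightarrow> 'a \<Rightarrow> 'a^4" where
  "pt x0 x1 x2 x3 = vector [x0, x1, x2, x3]"

definition proportional :: "'a::field^4 \<Rightarrow> 'a^4 \<Rightarrow> bool" where
  "proportional u v \<longleftrightarrow> (\<exists>k. k \<noteq> 0 \<and> v = k *s u)"

definition line_through :: "'a::field^4 \<Rightarrow> 'a^4 \<Rightarrow> ('a^4) set" where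
  "line_through u v = {a *s u + b *s v | a b. True}"

definition is_line :: "('a::field^4) set \<Rightarrow> bool" where
  "is_line L \<longleftrightarrow> (\<exists>u v. u \<noteq> 0 \<and> v \<noteq> 0 \<and> \<not> proportional u v \<and> L = line_through u v)"

definition on_line :: "'a::field^4 \<Rightarrow> ('a^4) set \<Rightarrow> bool" where
  "on_line x L \<longleftrightarrow> x \<noteq> 0 \<and> x \<in> L"

definition pdot :: "'a::field^4 \<Rightarrow> 'a^4 \<Rightarrow> 'a" where
  "pdot c x = (\<Sum>i\<in>UNIV. c $ i * x $ i)"

definition line_in_plane :: "('a::field^4) set \<Rightarrow> 'a^4 \<Rightarrow> bool" where
  "line_in_plane L c \<longleftrightarrow> (\<forall>x\<in>L. pdot c x = 0)"

text \<open>Points of the twisted cubic, parametrised by t in F_q \<union> {\<infinity>} (None = \<infinity>).\<close>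
fun cpt :: "'a::field option \<Rightarrow> 'a^4" where
  "cpt (Some t) = pt (t^3) (t^2) t 1"
| "cpt None = pt 1 0 0 0"

definition cubic_vecs :: "('a::field^4) set" where
  "cubic_vecs = {k *s cpt t | k t. k \<noteq> 0}"

fun osc :: "'a::field option \<Rightarrow> 'a^4" where
  "osc (Some t) = pt 1 (- 3 * t) (3 * t^2) (- (t^3))"
| "osc None = pt 0 0 0 1"

fun tangent :: "'a::field option \<Rightarrow> ('a^4) set" where
  "tangent (Some t) = line_through (cpt (Some t)) (pt (3 * t^2) (2 * t) 1 0)"
| "tangent None = {x. x $ 3 = 0 \<and> x $ 4 = 0}"

definition UGamma_line :: "('a::{field,finite}^4) set \<Rightarrow> bool" where
  "UGamma_line L \<longleftrightarrow> is_line L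
     \<and> card {t. on_line (cpt t) L} = 1
     \<and> (\<forall>t. L \<noteq> tangent t)
     \<and> (\<exists>t. line_in_plane L (osc t))"

definition lines_meet :: "('a::field^4) set \<Rightarrow> ('a^4) set \<Rightarrow> bool" where
  "lines_meet L M \<longleftrightarrow> (\<exists>x. on_line x L \<and> on_line x M)"

definition compl_tangent_regulus :: "('a::field^4) set set" where
  "compl_tangent_regulus = {L. is_line L \<and> (\<forall>t. lines_meet L (tangent t))}"

text \<open>Projectivities: classes of invertible 4x4 matrices modulo nonzero scalars,
  acting on row vectors by x \<mapsto> x M.\<close>
definition proj_class :: "'a::field^4^4 \<Rightarrow> ('a^4^4) set" where
  "proj_class M = {(\<chi> i j. k * M $ i $ j) | k. k \<noteq> 0}"

definition Gq :: "('a::{field,finite}^4^4) set set" where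
  "Gq = {proj_class M | M. invertible M \<and> (\<lambda>x. x v* M) ` cubic_vecs = cubic_vecs}"

definition pmap :: "('a::field^4^4) set \<Rightarrow> ('a^4) set \<Rightarrow> ('a^4) set" where
  "pmap \<phi> L = {x v* M | x M. x \<in> L \<and> M \<in> \<phi>}"

definition orbit_Gq :: "('a::{field,finite}^4) set \<Rightarrow> ('a^4) set set" where
  "orbit_Gq L = {pmap \<phi> L | \<phi>. \<phi> \<in> Gq}"

definition stab_Gq :: "('a::{field,finite}^4) set \<Rightarrow> ('a^4^4) set set" where
  "stab_Gq L = {\<phi> \<in> Gq. pmap \<phi> L = L}"

definition mat4 :: "'a \<Rightarrow> 'a \<Rightarrow> 'a \<Rightarrow> 'a \<Rightarrow> 'a \<Rightarrow> 'a \<Rightarrow> 'a \<Rightarrow> 'a \<Rightarrow>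
    'a \<Rightarrow> 'a \<Rightarrow> 'a \<Rightarrow> 'a \<Rightarrow> 'a \<Rightarrow> 'a \<Rightarrow> 'a \<Rightarrow> 'a \<Rightarrow> ('a::zero)^4^4" where
  "mat4 a11 a12 a13 a14 a21 a22 a23 a24 a31 a32 a33 a34 a41 a42 a43 a44 =
     vector [vector [a11, a12, a13, a14], vector [a21, a22, a23, a24],
             vector [a31, a32, a33, a34], vector [a41, a42, a43, a44]]"

definition ell1 :: "('a::field^4) set" where
  "ell1 = line_through (pt 0 0 0 1) (pt 0 1 0 0)"

definition ell2 :: "('a::field^4) set" where
  "ell2 = line_through (pt 0 0 0 1) (pt 0 1 1 0)"

end

theory Submission
  imports Defs "HOL-Computational_Algebra.Polynomial"
begin

text \<open>For \<open>q > 5\<close> the elements of \<open>G\<^sub>q\<close> are the classes of the matrices \<open>M(a,b,c,d)\<close>, which act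
  on the parameter of the cubic by \<open>(x : y) \<mapsto> (ax + by : cx + dy)\<close>: a projectivity preserving the
  cubic can be moved to one fixing \<open>P\<^sub>\<infinity>\<close> and \<open>P\<^sub>0\<close>, and the quadrics through the cubic force that
  one to be diagonal. A U\<Gamma>-line through \<open>P\<^sub>t\<close> lies in the osculating plane at \<open>P\<^sub>t\<close>; moving
  \<open>P\<^sub>t\<close> to \<open>P\<^sub>0\<close>, the U\<Gamma>-lines through \<open>P\<^sub>0\<close> are the \<open>q\<close> lines joining \<open>P\<^sub>0\<close> to \<open>P(0,1,y,0)\<close>,
  so there are \<open>(q + 1)q\<close> U\<Gamma>-lines. In characteristic two \<open>M(a,b,c,d)\<close> maps \<open>\<ell>\<^sub>1\<close> (\<open>y = 0\<close>) to
  the line joining \<open>(b,d,0,0)\<close> and \<open>(0,0,b,d)\<close>; these \<open>q + 1\<close> lines are exactly the lines meeting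
  every tangent. Since \<open>diag(1,y,y\<^sup>2,y\<^sup>3)\<close> maps \<open>\<ell>\<^sub>2\<close> to the line joining \<open>P\<^sub>0\<close> and \<open>P(0,1,y,0)\<close>, the
  remaining \<open>q\<^sup>2 - 1\<close> U\<Gamma>-lines form the orbit of \<open>\<ell>\<^sub>2\<close>. The stabilisers are read off from the
  conditions on \<open>a, b, c, d\<close> for \<open>M(a,b,c,d)\<close> to fix \<open>\<ell>\<^sub>1\<close> or \<open>\<ell>\<^sub>2\<close>.\<close>

section \<open>Coordinates, matrices and lines\<close>

lemma pt_nth [simp]:
  "pt a b c d $ 1 = a" "pt a b c d $ 2 = b" "pt a b c d $ 3 = c" "pt a b c d $ 4 = d"
  unfolding pt_def vector_def by simp_all

lemma vec4_eq_iff: "(x::'a^4) = y \<longleftrightarrow> x$1 = y$1 \<and> x$2 = y$2 \<and> x$3 = y$3 \<and> x$4 = y$4"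
  by (auto simp: vec_eq_iff forall_4)

lemma pt_eta: "(x::'a::field^4) = pt (x$1) (x$2) (x$3) (x$4)"
  by (simp add: vec4_eq_iff)

lemma pt_eq_iff [simp]: "pt a b c d = pt a' b' c' d' \<longleftrightarrow> a = a' \<and> b = b' \<and> c = c' \<and> d = d'"
  by (simp add: vec4_eq_iff)

lemma pt_eq_0_iff [simp]: "pt a b c d = 0 \<longleftrightarrow> a = 0 \<and> b = 0 \<and> c = 0 \<and> d = 0"
  by (simp add: vec4_eq_iff)

lemma scalar_mult_pt [simp]: "k *s pt a b c d = pt (k*a) (k*b) (k*c) (k*d)"
  by (simp add: vec4_eq_iff)

lemma add_pt [simp]: "pt a b c d + pt a' b' c' d' = pt (a+a') (b+b') (c+c') (d+d')"
  by (simp add: vec4_eq_iff)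

lemma pdot_pt [simp]: "pdot (pt a b c d) (pt x y z w) = a*x + b*y + c*z + d*w"
  by (simp add: pdot_def sum_4)

lemma pdot_scalar_mult: "pdot (k *s c) x = k * pdot c x"
  by (simp add: pdot_def sum_distrib_left mult.assoc)

lemma mat4_nth [simp]:
  "mat4 a11 a12 a13 a14 a21 a22 a23 a24 a31 a32 a33 a34 a41 a42 a43 a44 $ 1 = pt a11 a12 a13 a14"
  "mat4 a11 a12 a13 a14 a21 a22 a23 a24 a31 a32 a33 a34 a41 a42 a43 a44 $ 2 = pt a21 a22 a23 a24"
  "mat4 a11 a12 a13 a14 a21 a22 a23 a24 a31 a32 a33 a34 a41 a42 a43 a44 $ 3 = pt a31 a32 a33 a34"
  "mat4 a11 a12 a13 a14 a21 a22 a23 a24 a31 a32 a33 a34 a41 a42 a43 a44 $ 4 = pt a41 a42 a43 a44"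
  unfolding mat4_def pt_def vector_def by simp_all

lemma mat4_eta:
  "(M::'a::field^4^4) = mat4 (M$1$1) (M$1$2) (M$1$3) (M$1$4) (M$2$1) (M$2$2) (M$2$3) (M$2$4)
     (M$3$1) (M$3$2) (M$3$3) (M$3$4) (M$4$1) (M$4$2) (M$4$3) (M$4$4)"
  by (simp add: vec4_eq_iff[of M] pt_eta[symmetric])

lemma mat4_eq_iff:
  "mat4 (a11::'a::field) a12 a13 a14 a21 a22 a23 a24 a31 a32 a33 a34 a41 a42 a43 a44 =
   mat4 b11 b12 b13 b14 b21 b22 b23 b24 b31 b32 b33 b34 b41 b42 b43 b44 \<longleftrightarrow>
   a11 = b11 \<and> a12 = b12 \<and> a13 = b13 \<and> a14 = b14 \<and> a21 = b21 \<and> a22 = b22 \<and> a23 = b23 \<and> a24 = b24 \<and>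
   a31 = b31 \<and> a32 = b32 \<and> a33 = b33 \<and> a34 = b34 \<and> a41 = b41 \<and> a42 = b42 \<and> a43 = b43 \<and> a44 = b44"
  by (subst vec4_eq_iff) simp

lemma mat1_eq_mat4: "(mat 1 :: 'a::field^4^4) = mat4 1 0 0 0 0 1 0 0 0 0 1 0 0 0 0 1"
  by (simp add: vec4_eq_iff mat_def)

lemma pt_vector_matrix_mult_mat4 [simp]:
  "pt (x1::'a::field) x2 x3 x4 v* mat4 a11 a12 a13 a14 a21 a22 a23 a24 a31 a32 a33 a34 a41 a42 a43 a44
   = pt (x1*a11 + x2*a21 + x3*a31 + x4*a41) (x1*a12 + x2*a22 + x3*a32 + x4*a42)
        (x1*a13 + x2*a23 + x3*a33 + x4*a43) (x1*a14 + x2*a24 + x3*a34 + x4*a44)"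
  by (simp add: vec4_eq_iff vector_matrix_mult_def sum_4 mult.commute)

lemma mat4_mult_mat4 [simp]:
  "mat4 (a11::'a::field) a12 a13 a14 a21 a22 a23 a24 a31 a32 a33 a34 a41 a42 a43 a44 **
   mat4 b11 b12 b13 b14 b21 b22 b23 b24 b31 b32 b33 b34 b41 b42 b43 b44 =
   mat4 (a11*b11+a12*b21+a13*b31+a14*b41) (a11*b12+a12*b22+a13*b32+a14*b42)
        (a11*b13+a12*b23+a13*b33+a14*b43) (a11*b14+a12*b24+a13*b34+a14*b44)
        (a21*b11+a22*b21+a23*b31+a24*b41) (a21*b12+a22*b22+a23*b32+a24*b42)
        (a21*b13+a22*b23+a23*b33+a24*b43) (a21*b14+a22*b24+a23*b34+a24*b44)
        (a31*b11+a32*b21+a33*b31+a34*b41) (a31*b12+a32*b22+a33*b32+a34*b42)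
        (a31*b13+a32*b23+a33*b33+a34*b43) (a31*b14+a32*b24+a33*b34+a34*b44)
        (a41*b11+a42*b21+a43*b31+a44*b41) (a41*b12+a42*b22+a43*b32+a44*b42)
        (a41*b13+a42*b23+a43*b33+a44*b43) (a41*b14+a42*b24+a43*b34+a44*b44)"
  by (simp add: vec4_eq_iff matrix_matrix_mult_def sum_4)

lemma unit_pt_vector_matrix_mult:
  "pt 1 0 0 0 v* M = M $ 1" "pt 0 0 0 1 v* M = M $ 4"
  by (simp_all add: vec_eq_iff vector_matrix_mult_def sum_4)

lemma pt_vector_matrix_mult_rows:
  "pt x1 x2 x3 x4 v* M = x1 *s M$1 + x2 *s M$2 + x3 *s M$3 + x4 *s M$4"
  by (simp add: vec_eq_iff vector_matrix_mult_def sum_4 mult.commute)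

text \<open>Negation permutes the nonzero elements, so \<open>(-1)^(q-1) = 1\<close>; for even \<open>q\<close> this says \<open>-1 = 1\<close>.\<close>

lemma even_card_imp_two_eq_zero:
  assumes "even CARD('a::{field,finite})"
  shows "(2::'a) = 0"
proof -
  let ?U = "UNIV - {0::'a}"
  have "(\<Prod>y\<in>?U. (-1) * y) = (\<Prod>y\<in>?U. y)"
    by (rule prod.reindex_bij_witness[of _ uminus uminus]) auto
  then have "(-1) ^ card ?U * (\<Prod>y\<in>?U. y) = (\<Prod>y\<in>?U. y)"
    by (simp only: prod.distrib prod_constant)
  moreover have "(\<Prod>y\<in>?U. y) \<noteq> 0"
    by simp
  ultimately have "(-1::'a) ^ card ?U = 1"
    by simp
  moreover have "odd (card ?U)"
    using assms finite_UNIV_card_ge_0[where ?'a = 'a] by (simp add: card_Diff_singleton)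
  ultimately have "(-1::'a) = 1"
    by simp
  then show ?thesis
    by (metis add.right_inverse one_add_one)
qed

lemma three_eq_one_if_two_eq_zero: "(2::'a::field) = 0 \<Longrightarrow> (3::'a) = 1"
  by (metis add_0 numeral_plus_one semiring_norm(5))

definition smat :: "'a::comm_ring_1 \<Rightarrow> 'a^'n^'m \<Rightarrow> 'a^'n^'m" where
  "smat k M = (\<chi> i j. k * M $ i $ j)"

lemma smat_nth [simp]: "smat k M $ i $ j = k * M $ i $ j"
  by (simp add: smat_def)

lemma smat_mult_left: "smat k A ** B = smat k (A ** B)"
  by (simp add: vec_eq_iff matrix_matrix_mult_def sum_distrib_left mult.assoc)

lemma smat_mult_right: "A ** smat k B = smat k (A ** B)"
  by (simp add: vec_eq_iff matrix_matrix_mult_def sum_distrib_left mult_ac)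

lemma smat_smat [simp]: "smat k (smat l A) = smat (k*l) A"
  by (simp add: vec_eq_iff mult.assoc)

lemma smat_1 [simp]: "smat 1 A = A"
  by (simp add: vec_eq_iff)

lemma smat_mat4 [simp]:
  "smat (k::'a::field) (mat4 a11 a12 a13 a14 a21 a22 a23 a24 a31 a32 a33 a34 a41 a42 a43 a44)
   = mat4 (k*a11) (k*a12) (k*a13) (k*a14) (k*a21) (k*a22) (k*a23) (k*a24)
          (k*a31) (k*a32) (k*a33) (k*a34) (k*a41) (k*a42) (k*a43) (k*a44)"
  by (simp add: vec4_eq_iff)

lemma vector_matrix_mult_smat: "x v* smat k A = k *s (x v* A)"
  by (simp add: vec_eq_iff vector_matrix_mult_def sum_distrib_left mult_ac)

lemma proj_class_eq: "proj_class M = {smat k M | k. k \<noteq> 0}"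
  by (simp add: proj_class_def smat_def)

lemma proj_class_self: "M \<in> proj_class M"
  unfolding proj_class_eq by (auto intro!: exI[of _ 1])

lemma proj_class_smat: assumes "k \<noteq> 0" shows "proj_class (smat k A) = proj_class A"
proof -
  have "smat j (smat k A) \<in> proj_class A" if "j \<noteq> 0" for j
    using that assms unfolding proj_class_eq by (auto intro!: exI[of _ "j*k"])
  moreover have "smat j A \<in> proj_class (smat k A)" if "j \<noteq> 0" for j
  proof -
    have "smat j A = smat (j/k) (smat k A)" using assms by simp
    then show ?thesis using that assms unfolding proj_class_eq by fastforce
  qed
  ultimately show ?thesis
    unfolding proj_class_eq[of "smat k A"] proj_class_eq[of A] by blast
qed

lemma proj_class_eqE:
  assumes "proj_class A = proj_class B"
  obtains k where "k \<noteq> 0" "B = smat k A"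
  using proj_class_self[of B] assms unfolding proj_class_eq by auto

lemma smat_mult_right_inverse:
  fixes M :: "'a::field^'n^'m"
  assumes "B ** B' = smat e (mat 1)" "e \<noteq> 0"
  shows "M = smat (1/e) ((M ** B) ** B')"
proof -
  have "(M ** B) ** B' = smat e M"
    using assms(1) by (simp add: matrix_mul_assoc[symmetric] smat_mult_right)
  then show ?thesis
    using assms(2) by simp
qed

lemma vector_matrix_mult_eq_0_if_right_inverse:
  fixes A :: "'a::field^'n^'m"
  assumes "A ** B = smat k (mat 1)" "k \<noteq> 0" "x v* A = 0"
  shows "x = 0"
proof -
  have "k *s x = x v* (A ** B)"
    using assms(1) by (simp add: vector_matrix_mult_smat)
  also have "\<dots> = 0"
    using assms(3) by (simp add: vector_matrix_mul_assoc[symmetric])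
  finally show ?thesis
    using assms(2) by simp
qed

lemma in_line_through_iff: "x \<in> line_through u v \<longleftrightarrow> (\<exists>a b. x = a *s u + b *s v)"
  by (auto simp: line_through_def)

lemma line_through_commute: "line_through u v = line_through v u"
  unfolding line_through_def by (auto; metis add.commute)

lemma line_through_generators: "u \<in> line_through u v" "v \<in> line_through u v"
  unfolding in_line_through_iff
  by (rule exI[of _ 1], rule exI[of _ 0], simp, rule exI[of _ 0], rule exI[of _ 1], simp)

lemma line_through_scalar_mult_closed:
  assumes "x \<in> line_through u v" shows "k *s x \<in> line_through u v"
proof -
  obtain a b where "x = a *s u + b *s v" using assms in_line_through_iff by blast
  then have "k *s x = (k*a) *s u + (k*b) *s v" by (simp add: vec_eq_iff algebra_simps)
  then show ?thesis using in_line_through_iff by blast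
qed

lemma line_through_add_closed:
  assumes "x \<in> line_through u v" "y \<in> line_through u v" shows "x + y \<in> line_through u v"
proof -
  obtain a b a' b' where "x = a *s u + b *s v" "y = a' *s u + b' *s v"
    using assms in_line_through_iff by metis
  then have "x + y = (a+a') *s u + (b+b') *s v" by (simp add: vec_eq_iff algebra_simps)
  then show ?thesis using in_line_through_iff by blast
qed

lemma line_through_subset_iff:
  "line_through u v \<subseteq> line_through u' v' \<longleftrightarrow> u \<in> line_through u' v' \<and> v \<in> line_through u' v'"
  by (auto simp: in_line_through_iff[of _ u v] line_through_generators
           intro!: line_through_add_closed line_through_scalar_mult_closed)

lemma line_through_eqI:
  fixes u v :: "'a::field^4"
  assumes "u' = \<alpha> *s u + \<beta> *s v" "v' = \<gamma> *s u + \<delta> *s v" and det: "\<alpha> * \<delta> - \<beta> * \<gamma> \<noteq> 0"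
  shows "line_through u' v' = line_through u v"
proof
  show "line_through u' v' \<subseteq> line_through u v"
    unfolding assms(1,2) line_through_subset_iff
    by (simp add: line_through_add_closed line_through_scalar_mult_closed line_through_generators)
  let ?D = "\<alpha> * \<delta> - \<beta> * \<gamma>"
  have "?D *s u = \<delta> *s u' + (-\<beta>) *s v'" "?D *s v = (-\<gamma>) *s u' + \<alpha> *s v'"
    unfolding assms(1,2) by (simp_all add: vec_eq_iff algebra_simps)
  then have "(1/?D) *s (?D *s u) \<in> line_through u' v'" "(1/?D) *s (?D *s v) \<in> line_through u' v'"
    using in_line_through_iff line_through_scalar_mult_closed by metis+
  moreover have "(1/?D) *s (?D *s w) = w" for w :: "'a^4"
    using det by (simp only: vector_smult_assoc) simp
  ultimately show "line_through u v \<subseteq> line_through u' v'"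
    by (simp add: line_through_subset_iff)
qed

lemma line_through_scale_left: "k \<noteq> 0 \<Longrightarrow> line_through (k *s u) v = line_through u (v::'a::field^4)"
  by (rule line_through_eqI[where \<alpha>=k and \<beta>=0 and \<gamma>=0 and \<delta>=1]) simp_all

lemma line_through_scale_right: "k \<noteq> 0 \<Longrightarrow> line_through u (k *s v) = line_through u (v::'a::field^4)"
  by (rule line_through_eqI[where \<alpha>=1 and \<beta>=0 and \<gamma>=0 and \<delta>=k]) simp_all

lemma line_through_add_multiple: "line_through u (v + k *s u) = line_through u (v::'a::field^4)"
  by (rule line_through_eqI[where \<alpha>=1 and \<beta>=0 and \<gamma>=k and \<delta>=1]) (simp_all add: add.commute)

lemma is_line_scalar_mult_closed: "is_line L \<Longrightarrow> x \<in> L \<Longrightarrow> k *s x \<in> L"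
  unfolding is_line_def using line_through_scalar_mult_closed by blast

lemma line_through_eq_span:
  assumes "L = line_through p q" "z1 \<in> L" "z2 \<in> L" "z1 \<noteq> 0" "z2 \<noteq> 0" "\<not> proportional z1 z2"
  shows "L = line_through z1 (z2::'a::field^4)"
proof -
  obtain \<alpha> \<beta> \<gamma> \<delta> where z1: "z1 = \<alpha> *s p + \<beta> *s q" and z2: "z2 = \<gamma> *s p + \<delta> *s q"
    using assms(1-3) in_line_through_iff by metis
  have "\<alpha>*\<delta> - \<beta>*\<gamma> \<noteq> 0"
  proof
    assume det: "\<alpha>*\<delta> - \<beta>*\<gamma> = 0"
    obtain k where k: "z2 = k *s z1"
    proof (cases "\<alpha> = 0")
      case True
      then have "\<beta> \<noteq> 0" "\<gamma> = 0" using z1 assms(4) det by auto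
      then show ?thesis using z1 z2 True by (intro that[of "\<delta>/\<beta>"]) (simp add: vec_eq_iff)
    next
      case False
      then have "\<delta> = (\<gamma>/\<alpha>)*\<beta>" using det by (simp add: field_simps)
      then show ?thesis using z1 z2 False
        by (intro that[of "\<gamma>/\<alpha>"]) (simp add: vec_eq_iff algebra_simps)
    qed
    then show False using assms(5,6) unfolding proportional_def by auto
  qed
  then show ?thesis using line_through_eqI[OF z1 z2] assms(1) by simp
qed

definition mat_image :: "'a::field^4^4 \<Rightarrow> ('a^4) set \<Rightarrow> ('a^4) set" where
  "mat_image M L = (\<lambda>x. x v* M) ` L"

lemma mat_image_line_through: "mat_image M (line_through u v) = line_through (u v* M) (v v* M)"
proof -
  have "\<And>a b. (a *s u + b *s v) v* M = a *s (u v* M) + b *s (v v* M)"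
    by (simp add: vector_matrix_left_distrib scalar_vector_matrix_assoc)
  then show ?thesis unfolding mat_image_def line_through_def
    by (auto simp: image_iff) metis
qed

lemma mat_image_mat_image: "mat_image B (mat_image A L) = mat_image (A ** B) L"
  by (auto simp: mat_image_def image_image vector_matrix_mul_assoc)

lemma mat_image_smat:
  assumes "k \<noteq> 0" "is_line L" shows "mat_image (smat k A) L = mat_image A L"
  using assms unfolding is_line_def
  by (auto simp: mat_image_line_through vector_matrix_mult_smat
           line_through_scale_left line_through_scale_right)

lemma mat_image_scalar_inverse:
  assumes "A ** B = smat k (mat 1)" "k \<noteq> 0" "is_line L"
  shows "mat_image B (mat_image A L) = L"
proof -
  have "mat_image B (mat_image A L) = mat_image (smat k (mat 1)) L"
    by (simp add: mat_image_mat_image assms(1))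
  also have "\<dots> = mat_image (mat 1) L"
    by (rule mat_image_smat[OF assms(2,3)])
  finally show ?thesis
    by (simp add: mat_image_def)
qed

lemma pmap_proj_class:
  assumes "L = line_through u v" shows "pmap (proj_class M) L = mat_image M L"
proof
  show "pmap (proj_class M) L \<subseteq> mat_image M L"
  proof
    fix z assume "z \<in> pmap (proj_class M) L"
    then obtain x k where "x \<in> L" "z = x v* smat k M"
      by (auto simp: pmap_def proj_class_eq)
    then have "z = (k *s x) v* M"
      by (simp add: vector_matrix_mult_smat scalar_vector_matrix_assoc)
    moreover have "k *s x \<in> L" using \<open>x \<in> L\<close> assms line_through_scalar_mult_closed by blast
    ultimately show "z \<in> mat_image M L" by (simp add: mat_image_def)
  qed
  show "mat_image M L \<subseteq> pmap (proj_class M) L"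
    unfolding mat_image_def pmap_def proj_class_eq by (force intro: exI[of _ 1])
qed

section \<open>The group \<open>G\<^sub>q\<close>\<close>

text \<open>\<open>P\<^sub>t = cubic_point t 1\<close>, \<open>P\<^sub>\<infinity> = cubic_point 1 0\<close>, and \<open>cubic_mat a b c d\<close> is the matrix \<open>M\<close>
  describing the elements of \<open>G\<^sub>q\<close>.\<close>

definition cubic_point :: "'a::field \<Rightarrow> 'a \<Rightarrow> 'a^4" where
  "cubic_point x y = pt (x^3) (x^2*y) (x*y^2) (y^3)"

definition cubic_mat :: "'a::field \<Rightarrow> 'a \<Rightarrow> 'a \<Rightarrow> 'a \<Rightarrow> 'a^4^4" where
  "cubic_mat a b c d = mat4 (a^3) (a^2*c) (a*c^2) (c^3)
      (3*a^2*b) (a^2*d+2*a*b*c) (b*c^2+2*a*c*d) (3*c^2*d)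
      (3*a*b^2) (b^2*c+2*a*b*d) (a*d^2+2*b*c*d) (3*c*d^2)
      (b^3) (b^2*d) (b*d^2) (d^3)"

lemma cubic_point_mult_cubic_mat:
  "cubic_point x y v* cubic_mat a b c d = cubic_point (a*x+b*y) (c*x+d*y)"
  unfolding cubic_point_def cubic_mat_def pt_vector_matrix_mult_mat4 pt_eq_iff
  by (intro conjI; algebra)

lemma cubic_point_scale: "cubic_point (l*x) (l*y) = l^3 *s cubic_point x y"
  unfolding cubic_point_def scalar_mult_pt pt_eq_iff by (intro conjI; algebra)

lemma cubic_mat_mult:
  "cubic_mat a b c d ** cubic_mat a' b' c' d' =
   cubic_mat (a*a'+c*b') (b*a'+d*b') (a*c'+c*d') (b*c'+d*d')"
  unfolding cubic_mat_def mat4_mult_mat4 mat4_eq_iff by (intro conjI; algebra)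

lemma cubic_mat_homogeneous: "cubic_mat (l*a) (l*b) (l*c) (l*d) = smat (l^3) (cubic_mat a b c d)"
  unfolding cubic_mat_def smat_mat4 mat4_eq_iff by (intro conjI; algebra)

lemma cubic_mat_adjugate:
  "cubic_mat a b c d ** cubic_mat d (-b) (-c) a = smat ((a*d-b*c)^3) (mat 1)"
  "cubic_mat d (-b) (-c) a ** cubic_mat a b c d = smat ((a*d-b*c)^3) (mat 1)"
proof -
  have "cubic_mat a b c d ** cubic_mat d (-b) (-c) a = cubic_mat (a*d-b*c) 0 0 (a*d-b*c)"
       "cubic_mat d (-b) (-c) a ** cubic_mat a b c d = cubic_mat (a*d-b*c) 0 0 (a*d-b*c)"
    unfolding cubic_mat_mult by (simp_all add: algebra_simps)
  moreover have "cubic_mat k 0 0 k = smat (k^3) (mat 1)" for k :: 'a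
    unfolding cubic_mat_def mat1_eq_mat4 smat_mat4 mat4_eq_iff
    by (simp add: power2_eq_square power3_eq_cube)
  ultimately show
    "cubic_mat a b c d ** cubic_mat d (-b) (-c) a = smat ((a*d-b*c)^3) (mat 1)"
    "cubic_mat d (-b) (-c) a ** cubic_mat a b c d = smat ((a*d-b*c)^3) (mat 1)"
    by simp_all
qed

lemma invertible_cubic_mat: "a*d-b*c \<noteq> 0 \<Longrightarrow> invertible (cubic_mat a b c d)"
  unfolding invertible_def
  by (rule exI[of _ "smat (1/(a*d-b*c)^3) (cubic_mat d (-b) (-c) a)"])
     (simp add: smat_mult_left smat_mult_right cubic_mat_adjugate)

definition cubic_mats :: "('a::field^4^4) set" where
  "cubic_mats = {cubic_mat a b c d | a b c d. a*d - b*c \<noteq> 0}"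

lemma cubic_matsI: "a*d - b*c \<noteq> 0 \<Longrightarrow> cubic_mat a b c d \<in> cubic_mats"
  unfolding cubic_mats_def by blast

lemma cubic_mats_mult:
  assumes "A \<in> cubic_mats" "B \<in> cubic_mats" shows "A ** B \<in> cubic_mats"
proof -
  obtain a b c d a' b' c' d' where
    "A = cubic_mat a b c d" "a*d - b*c \<noteq> 0" "B = cubic_mat a' b' c' d'" "a'*d' - b'*c' \<noteq> 0"
    using assms unfolding cubic_mats_def by blast
  moreover have "(a*a'+c*b')*(b*c'+d*d') - (b*a'+d*b')*(a*c'+c*d') = (a*d-b*c)*(a'*d'-b'*c')"
    by algebra
  ultimately show ?thesis
    by (simp add: cubic_mat_mult cubic_matsI)
qed

lemma cubic_mats_inverse:
  assumes "A \<in> cubic_mats"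
  obtains B k where "B \<in> cubic_mats" "k \<noteq> 0" "A ** B = smat k (mat 1)" "B ** A = smat k (mat 1)"
proof -
  obtain a b c d where A: "A = cubic_mat a b c d" "a*d - b*c \<noteq> 0"
    using assms unfolding cubic_mats_def by blast
  then have "cubic_mat d (-b) (-c) a \<in> cubic_mats"
    using cubic_matsI[of d a "-b" "-c"] by (simp add: mult.commute)
  then show ?thesis
    using that[of "cubic_mat d (-b) (-c) a" "(a*d-b*c)^3"] A(2)
    unfolding A(1) cubic_mat_adjugate by simp
qed

lemma cubic_mats_vector_mult_eq_0:
  assumes "A \<in> cubic_mats" "x v* A = 0" shows "x = 0"
proof -
  obtain B k where "k \<noteq> 0" "A ** B = smat k (mat 1)"
    using cubic_mats_inverse[OF assms(1)] by metis
  then show ?thesis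
    using vector_matrix_mult_eq_0_if_right_inverse assms(2) by blast
qed

lemma is_line_mat_image:
  assumes "A \<in> cubic_mats" "is_line L" shows "is_line (mat_image A L)"
proof -
  obtain u v where uv: "u \<noteq> 0" "v \<noteq> 0" "\<not> proportional u v" "L = line_through u v"
    using assms(2) unfolding is_line_def by blast
  have "u v* A \<noteq> 0" "v v* A \<noteq> 0"
    using uv cubic_mats_vector_mult_eq_0[OF assms(1)] by blast+
  moreover have "\<not> proportional (u v* A) (v v* A)"
  proof
    assume "proportional (u v* A) (v v* A)"
    then obtain k where k: "k \<noteq> 0" "v v* A = k *s (u v* A)" unfolding proportional_def by blast
    then have "(v - k *s u) v* A = 0"
      by (simp add: vector_matrix_mult_diff_distrib scalar_vector_matrix_assoc)
    then have "v - k *s u = 0"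
      by (rule cubic_mats_vector_mult_eq_0[OF assms(1)])
    then have "v = k *s u"
      by simp
    then show False using uv(3) k(1) unfolding proportional_def by blast
  qed
  ultimately show ?thesis unfolding is_line_def uv(4) mat_image_line_through by blast
qed

lemma mat_image_inj:
  assumes "A \<in> cubic_mats" "mat_image A L = mat_image A L'" shows "L = L'"
proof -
  have "inj (\<lambda>x. x v* A)"
    by (rule injI)
       (metis assms(1) cubic_mats_vector_mult_eq_0 right_minus_eq vector_matrix_mult_diff_distrib)
  then show ?thesis
    using assms(2) by (simp add: mat_image_def inj_image_eq_iff)
qed

fun hom_coords :: "'a::field option \<Rightarrow> 'a \<times> 'a" where
  "hom_coords (Some t) = (t, 1)"
| "hom_coords None = (1, 0)"

lemma hom_coords_nonzero: "fst (hom_coords t) \<noteq> 0 \<or> snd (hom_coords t) \<noteq> 0"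
  by (cases t) simp_all

lemma hom_coords_cases:
  assumes "x \<noteq> 0 \<or> y \<noteq> (0::'a::field)"
  obtains t l where "l \<noteq> 0" "x = l * fst (hom_coords t)" "y = l * snd (hom_coords t)"
proof (cases "y = 0")
  case True
  then show ?thesis using assms that[of x None] by simp
next
  case False
  then show ?thesis using that[of y "Some (x/y)"] by simp
qed

lemma hom_coords_eq_iff:
  "fst (hom_coords s) * snd (hom_coords t) = fst (hom_coords t) * snd (hom_coords s) \<longleftrightarrow> s = t"
  by (cases s; cases t) auto

lemma cpt_eq_cubic_point: "cpt t = cubic_point (fst (hom_coords t)) (snd (hom_coords t))"
  by (cases t) (simp_all add: cubic_point_def)

lemma cpt_nonzero: "cpt t \<noteq> 0"
  by (cases t) simp_all

lemma cpt_in_cubic_vecs: "cpt t \<in> cubic_vecs"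
  unfolding cubic_vecs_def by (auto intro!: exI[of _ 1])

lemma cubic_point_in_cubic_vecs:
  assumes "x \<noteq> 0 \<or> y \<noteq> 0" "k \<noteq> 0" shows "k *s cubic_point x y \<in> cubic_vecs"
proof -
  obtain t l where l: "l \<noteq> 0" and xy: "x = l * fst (hom_coords t)" "y = l * snd (hom_coords t)"
    by (rule hom_coords_cases[OF assms(1)])
  have "k *s cubic_point x y = (k * l^3) *s cpt t"
    unfolding xy cubic_point_scale cpt_eq_cubic_point by (rule vector_smult_assoc)
  moreover have "k * l^3 \<noteq> 0"
    using assms(2) l by simp
  ultimately show ?thesis
    unfolding cubic_vecs_def by blast
qed

lemma cubic_vecsE:
  assumes "v \<in> cubic_vecs"
  obtains k x y where "k \<noteq> 0" "x \<noteq> 0 \<or> y \<noteq> 0" "v = k *s cubic_point x y"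
proof -
  obtain k t where "k \<noteq> 0" "v = k *s cpt t"
    using assms unfolding cubic_vecs_def by blast
  then show ?thesis
    using that[of k "fst (hom_coords t)" "snd (hom_coords t)"] hom_coords_nonzero[of t]
    by (simp add: cpt_eq_cubic_point)
qed

lemma cubic_vecs_scalar_mult:
  assumes "k \<noteq> 0" "v \<in> cubic_vecs" shows "k *s v \<in> cubic_vecs"
proof -
  obtain j x y where "j \<noteq> 0" "x \<noteq> 0 \<or> y \<noteq> 0" "v = j *s cubic_point x y"
    using cubic_vecsE[OF assms(2)] by metis
  then show ?thesis
    using cubic_point_in_cubic_vecs[of x y "k*j"] assms(1) by simp
qed

lemma cubic_vecs_quadrics:
  assumes "v \<in> cubic_vecs"
  shows "(v$2)^2 = v$1 * v$3" "(v$3)^2 = v$2 * v$4" "v$1 * v$4 = v$2 * v$3"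
proof -
  obtain k x y where v: "v = k *s cubic_point x y" using cubic_vecsE[OF assms] by metis
  show "(v$2)^2 = v$1 * v$3" "(v$3)^2 = v$2 * v$4" "v$1 * v$4 = v$2 * v$3"
    unfolding v by (simp_all add: cubic_point_def) algebra+
qed

lemma nonsingular_image_nonzero:
  assumes "x \<noteq> 0 \<or> y \<noteq> 0" "a*d-b*c \<noteq> 0"
  shows "a*x+b*y \<noteq> 0 \<or> c*x+d*(y::'a::field) \<noteq> 0"
proof -
  have "(a*d-b*c)*x = d*(a*x+b*y) - b*(c*x+d*y)" "(a*d-b*c)*y = a*(c*x+d*y) - c*(a*x+b*y)"
    by algebra+
  then show ?thesis using assms by auto
qed

lemma cubic_mat_maps_cubic_vecs:
  assumes "a*d-b*c \<noteq> 0" "v \<in> cubic_vecs" shows "v v* cubic_mat a b c d \<in> cubic_vecs"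
proof -
  obtain k x y where kxy: "k \<noteq> 0" "x \<noteq> 0 \<or> y \<noteq> 0" "v = k *s cubic_point x y"
    using cubic_vecsE[OF assms(2)] by metis
  then have "v v* cubic_mat a b c d = k *s cubic_point (a*x+b*y) (c*x+d*y)"
    by (simp add: scalar_vector_matrix_assoc cubic_point_mult_cubic_mat)
  then show ?thesis
    using cubic_point_in_cubic_vecs[OF nonsingular_image_nonzero[OF kxy(2) assms(1)] kxy(1)]
    by simp
qed

lemma image_cubic_mat_cubic_vecs:
  assumes "a*d-b*c \<noteq> 0"
  shows "(\<lambda>x. x v* cubic_mat a b c d) ` cubic_vecs = cubic_vecs"
proof
  show "(\<lambda>x. x v* cubic_mat a b c d) ` cubic_vecs \<subseteq> cubic_vecs"
    using cubic_mat_maps_cubic_vecs[OF assms] by blast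
  show "cubic_vecs \<subseteq> (\<lambda>x. x v* cubic_mat a b c d) ` cubic_vecs"
  proof
    fix v :: "'a^4" assume v: "v \<in> cubic_vecs"
    define e where "e = (a*d-b*c)^3"
    define w where "w = (1/e) *s (v v* cubic_mat d (-b) (-c) a)"
    have "e \<noteq> 0" "d*a - (-b)*(-c) \<noteq> 0"
      using assms by (simp_all add: e_def mult.commute)
    then have w: "w \<in> cubic_vecs"
      unfolding w_def by (intro cubic_vecs_scalar_mult cubic_mat_maps_cubic_vecs v) simp_all
    have "w v* cubic_mat a b c d = (1/e) *s (v v* (cubic_mat d (-b) (-c) a ** cubic_mat a b c d))"
      unfolding w_def by (simp add: scalar_vector_matrix_assoc vector_matrix_mul_assoc)
    also have "\<dots> = (1/e) *s (e *s v)"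
      by (simp add: cubic_mat_adjugate vector_matrix_mult_smat e_def)
    also have "\<dots> = v"
      using \<open>e \<noteq> 0\<close> by (simp only: vector_smult_assoc) simp
    finally show "v \<in> (\<lambda>x. x v* cubic_mat a b c d) ` cubic_vecs"
      using w by (metis image_eqI)
  qed
qed

lemma cubic_mats_in_Gq:
  assumes "A \<in> cubic_mats" shows "proj_class A \<in> (Gq :: ('a::{field,finite}^4^4) set set)"
proof -
  obtain a b c d where "A = cubic_mat a b c d" "a*d - b*c \<noteq> (0::'a)"
    using assms unfolding cubic_mats_def by blast
  then have "invertible A" "(\<lambda>x. x v* A) ` cubic_vecs = cubic_vecs"
    by (simp_all add: invertible_cubic_mat image_cubic_mat_cubic_vecs)
  then show ?thesis
    unfolding Gq_def by blast
qed

lemma poly_eq_0_if_vanishes_on_finite_field: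
  fixes p :: "'a::{idom,finite} poly"
  assumes "degree p < CARD('a)" "\<forall>t. poly p t = 0"
  shows "p = 0"
proof (rule ccontr)
  assume "p \<noteq> 0"
  then have "card {t. poly p t = 0} \<le> degree p"
    by (rule card_poly_roots_bound)
  then show False
    using assms by simp
qed

lemma quintic_vanishes_on_finite_field:
  fixes c0 c1 c2 c3 c4 c5 :: "'a::{idom,finite}"
  assumes "CARD('a) > 5" "\<forall>t. c0 + c1*t + c2*t^2 + c3*t^3 + c4*t^4 + c5*t^5 = 0"
  shows "c0 = 0 \<and> c1 = 0 \<and> c2 = 0 \<and> c3 = 0 \<and> c4 = 0 \<and> c5 = 0"
proof -
  define p where "p = [:c0, c1, c2, c3, c4, c5:]"
  have "poly p t = c0 + c1*t + c2*t^2 + c3*t^3 + c4*t^4 + c5*t^5" for t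
    unfolding p_def by simp algebra
  moreover have "degree p \<le> 5"
    unfolding p_def by simp
  ultimately have "p = 0"
    using assms by (intro poly_eq_0_if_vanishes_on_finite_field) simp_all
  then show ?thesis
    by (simp add: p_def)
qed

text \<open>Substituting the curve into the three quadrics through the cubic gives polynomial
  identities of degree at most 5 in \<open>t\<close>, whose coefficients vanish as \<open>q > 5\<close>.\<close>

lemma cubic_vecs_curve_coeffs:
  fixes K1 K4 a2 a3 b2 b3 c2 c3 d2 d3 :: "'a::{field,finite}"
  assumes card: "CARD('a) > 5" and "K1 \<noteq> 0" "K4 \<noteq> 0"
    and curve: "\<And>t. pt (K1*t^3 + a2*t^2 + a3*t) (b2*t^2 + b3*t) (c2*t^2 + c3*t) (d2*t^2 + d3*t + K4)
      \<in> cubic_vecs"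
  shows "a2 = 0 \<and> a3 = 0 \<and> b3 = 0 \<and> c2 = 0 \<and> d2 = 0 \<and> d3 = 0 \<and> K1*c3 = b2^2 \<and> K1*K4 = b2*c3"
proof -
  note Q = cubic_vecs_quadrics[OF curve, simplified]
  have "0 + 0*t + (a3*c3 - b3^2)*t^2 + (a2*c3 + a3*c2 - 2*b2*b3)*t^3
      + (K1*c3 + a2*c2 - b2^2)*t^4 + (K1*c2)*t^5 = 0" for t
    using Q(1)[of t] by algebra
  note C1 = quintic_vanishes_on_finite_field[OF card allI[OF this]]
  have "0 + (K4*b3)*t + (K4*b2 + b3*d3 - c3^2)*t^2 + (b2*d3 + b3*d2 - 2*c2*c3)*t^3
      + (b2*d2 - c2^2)*t^4 + 0*t^5 = 0" for t
    using Q(2)[of t] by algebra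
  note C2 = quintic_vanishes_on_finite_field[OF card allI[OF this]]
  have "0 + (K4*a3)*t + (K4*a2 + a3*d3 - b3*c3)*t^2
      + (K1*K4 + a2*d3 + a3*d2 - b2*c3 - b3*c2)*t^3 + (K1*d3 + a2*d2 - b2*c2)*t^4 + (K1*d2)*t^5 = 0"
    for t using Q(3)[of t] by algebra
  note C3 = quintic_vanishes_on_finite_field[OF card allI[OF this]]
  have "c2 = 0" "b3 = 0" "d2 = 0" "a3 = 0" "d3 = 0" "a2 = 0"
    using C1 C2 C3 \<open>K1 \<noteq> 0\<close> \<open>K4 \<noteq> 0\<close> by auto
  with C1 C3 show ?thesis
    by auto
qed

lemma cubic_preserving_fixing_ends:
  fixes N :: "'a::{field,finite}^4^4"
  assumes card: "CARD('a) > 5"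
    and N1: "N$1 = pt K1 0 0 0" and N4: "N$4 = pt 0 0 0 K4" and "K1 \<noteq> 0" "K4 \<noteq> 0"
    and cubic: "\<And>t. cpt (Some t) v* N \<in> cubic_vecs"
  obtains \<delta> where "\<delta> \<noteq> 0" "N = smat K1 (cubic_mat 1 0 0 \<delta>)"
proof -
  define a2 where "a2 = N$2$1" define b2 where "b2 = N$2$2"
  define c2 where "c2 = N$2$3" define d2 where "d2 = N$2$4"
  define a3 where "a3 = N$3$1" define b3 where "b3 = N$3$2"
  define c3 where "c3 = N$3$3" define d3 where "d3 = N$3$4"
  have N: "N = mat4 K1 0 0 0 a2 b2 c2 d2 a3 b3 c3 d3 0 0 0 K4"
    by (subst mat4_eta) (simp add: N1 N4 a2_def b2_def c2_def d2_def a3_def b3_def c3_def d3_def)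
  have "cpt (Some t) v* N = pt (K1*t^3 + a2*t^2 + a3*t) (b2*t^2 + b3*t) (c2*t^2 + c3*t)
      (d2*t^2 + d3*t + K4)" for t
    unfolding N cpt.simps pt_vector_matrix_mult_mat4 pt_eq_iff by (intro conjI; algebra)
  then have zero: "a2 = 0" "a3 = 0" "b3 = 0" "c2 = 0" "d2 = 0" "d3 = 0"
    and rel: "K1*c3 = b2^2" "K1*K4 = b2*c3"
    using cubic_vecs_curve_coeffs[OF card \<open>K1 \<noteq> 0\<close> \<open>K4 \<noteq> 0\<close>] cubic by metis+
  define \<delta> where "\<delta> = b2/K1"
  have "b2 \<noteq> 0"
    using rel(2) \<open>K1 \<noteq> 0\<close> \<open>K4 \<noteq> 0\<close> by auto
  then have "\<delta> \<noteq> 0"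
    using \<open>K1 \<noteq> 0\<close> by (simp add: \<delta>_def)
  have "K1*\<delta> = b2" "K1*\<delta>^2 = c3" "K1*\<delta>^3 = K4"
    using rel \<open>K1 \<noteq> 0\<close> by (simp_all add: \<delta>_def power2_eq_square power3_eq_cube field_simps)
  then have "N = smat K1 (cubic_mat 1 0 0 \<delta>)"
    unfolding N cubic_mat_def smat_mat4 mat4_eq_iff using zero by simp
  with \<open>\<delta> \<noteq> 0\<close> show ?thesis
    by (rule that)
qed

lemma invertible_end_rows_distinct:
  fixes M :: "'a::field^4^4"
  assumes "invertible M" "M$1 = k1 *s cubic_point p1 p2" "M$4 = k4 *s cubic_point r1 r2"
    and "k1 \<noteq> 0" "p1 \<noteq> 0 \<or> p2 \<noteq> 0"
  shows "p1*r2 - p2*r1 \<noteq> 0"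
proof
  assume det: "p1*r2 - p2*r1 = 0"
  obtain l where l: "r1 = l*p1" "r2 = l*p2"
  proof (cases "p1 = 0")
    case True
    then show ?thesis
      using assms(5) det by (intro that[of "r2/p2"]) simp_all
  next
    case False
    then show ?thesis
      using det by (intro that[of "r1/p1"]) (simp_all add: field_simps)
  qed
  obtain Mi where Mi: "M ** Mi = smat 1 (mat 1)"
    using assms(1) unfolding invertible_def by auto
  have "pt (k4*l^3) 0 0 (-k1) v* M = 0"
    unfolding pt_vector_matrix_mult_rows assms(2,3) l cubic_point_scale
    by (simp add: cubic_point_def vec4_eq_iff algebra_simps)
  then have "pt (k4*l^3) 0 0 (-k1) = 0"
    by (rule vector_matrix_mult_eq_0_if_right_inverse[OF Mi one_neq_zero])
  then show False
    using assms(4) by simp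
qed

lemma cubic_preserving_end_rows:
  fixes M :: "'a::field^4^4"
  assumes "invertible M" "(\<lambda>x. x v* M) ` cubic_vecs \<subseteq> cubic_vecs"
  obtains k1 p1 p2 k4 r1 r2 where "k1 \<noteq> 0" "M$1 = k1 *s cubic_point p1 p2"
    "k4 \<noteq> 0" "M$4 = k4 *s cubic_point r1 r2" "p1*r2 - p2*r1 \<noteq> 0"
proof -
  have "pt 1 0 0 0 \<in> (cubic_vecs::('a^4) set)" "pt 0 0 0 1 \<in> (cubic_vecs::('a^4) set)"
    using cpt_in_cubic_vecs[of None] cpt_in_cubic_vecs[of "Some 0"] by simp_all
  then have "pt 1 0 0 0 v* M \<in> cubic_vecs" "pt 0 0 0 1 v* M \<in> cubic_vecs"
    using assms(2) by blast+
  then have "M$1 \<in> cubic_vecs" "M$4 \<in> cubic_vecs"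
    by (simp_all only: unit_pt_vector_matrix_mult)
  obtain k1 p1 p2 where P: "k1 \<noteq> 0" "p1 \<noteq> 0 \<or> p2 \<noteq> 0" "M$1 = k1 *s cubic_point p1 p2"
    by (rule cubic_vecsE[OF \<open>M$1 \<in> cubic_vecs\<close>])
  obtain k4 r1 r2 where R: "k4 \<noteq> 0" "r1 \<noteq> 0 \<or> r2 \<noteq> 0" "M$4 = k4 *s cubic_point r1 r2"
    by (rule cubic_vecsE[OF \<open>M$4 \<in> cubic_vecs\<close>])
  show ?thesis
    using that P(1,3) R(1,3) invertible_end_rows_distinct[OF assms(1) P(3) R(3) P(1,2)] by blast
qed

text \<open>\<open>cubic_mat r2 (-r1) p2 (-p1)\<close> moves the points \<open>(p1 : p2)\<close> and \<open>(r1 : r2)\<close> of the cubic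
  to \<open>P\<^sub>\<infinity>\<close> and \<open>P\<^sub>0\<close>.\<close>

lemma end_rows_mult_cubic_mat:
  fixes M :: "'a::field^4^4"
  assumes "M$1 = k1 *s cubic_point p1 p2" "M$4 = k4 *s cubic_point r1 r2"
  shows "(M ** cubic_mat r2 (-r1) p2 (-p1))$1 = pt (k1*(p1*r2 - p2*r1)^3) 0 0 0"
    and "(M ** cubic_mat r2 (-r1) p2 (-p1))$4 = pt 0 0 0 (-(k4*(p1*r2 - p2*r1)^3))"
proof -
  have rows: "(M ** B)$1 = M$1 v* B" "(M ** B)$4 = M$4 v* B" for B :: "'a^4^4"
    by (simp_all flip: unit_pt_vector_matrix_mult add: vector_matrix_mul_assoc)
  show "(M ** cubic_mat r2 (-r1) p2 (-p1))$1 = pt (k1*(p1*r2 - p2*r1)^3) 0 0 0"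
    unfolding rows assms scalar_vector_matrix_assoc cubic_point_mult_cubic_mat
    by (simp add: cubic_point_def algebra_simps)
  show "(M ** cubic_mat r2 (-r1) p2 (-p1))$4 = pt 0 0 0 (-(k4*(p1*r2 - p2*r1)^3))"
    unfolding rows assms scalar_vector_matrix_assoc cubic_point_mult_cubic_mat
    unfolding cubic_point_def by simp algebra
qed

lemma Gq_matrixE:
  fixes M :: "'a::{field,finite}^4^4"
  assumes card: "CARD('a) > 5" and "invertible M" "(\<lambda>x. x v* M) ` cubic_vecs = cubic_vecs"
  obtains k A where "k \<noteq> 0" "A \<in> cubic_mats" "M = smat k A"
proof -
  obtain k1 p1 p2 k4 r1 r2 where P: "k1 \<noteq> 0" "M$1 = k1 *s cubic_point p1 p2"
    and R: "k4 \<noteq> 0" "M$4 = k4 *s cubic_point r1 r2" and det: "p1*r2 - p2*r1 \<noteq> 0"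
    by (rule cubic_preserving_end_rows[OF assms(2) equalityD1[OF assms(3)]])
  define D where "D = p1*r2 - p2*r1"
  define B where "B = cubic_mat r2 (-r1) p2 (-p1)"
  have det_B: "r2*(-p1) - (-r1)*p2 \<noteq> 0"
    using det by (simp add: algebra_simps)
  have "cpt (Some t) v* M \<in> cubic_vecs" for t
    using assms(3) cpt_in_cubic_vecs by blast
  then have "cpt (Some t) v* (M ** B) \<in> cubic_vecs" for t
    unfolding B_def vector_matrix_mul_assoc[symmetric] by (rule cubic_mat_maps_cubic_vecs[OF det_B])
  moreover have "k1*D^3 \<noteq> 0" "-(k4*D^3) \<noteq> 0"
    using P(1) R(1) det by (simp_all add: D_def)
  ultimately obtain \<delta> where "\<delta> \<noteq> 0" and N: "M ** B = smat (k1*D^3) (cubic_mat 1 0 0 \<delta>)"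
    using cubic_preserving_fixing_ends[OF card end_rows_mult_cubic_mat[OF P(2) R(2), folded B_def D_def]]
    by blast
  obtain B' e where "B' \<in> cubic_mats" "e \<noteq> 0" "B ** B' = smat e (mat 1)"
    using cubic_mats_inverse[OF cubic_matsI[OF det_B, folded B_def]] by metis
  then have "M = smat (k1*D^3/e) (cubic_mat 1 0 0 \<delta> ** B')"
    using smat_mult_right_inverse[of B B' e M] by (simp add: N smat_mult_left)
  moreover have "cubic_mat 1 0 0 \<delta> ** B' \<in> cubic_mats"
    using \<open>\<delta> \<noteq> 0\<close> \<open>B' \<in> cubic_mats\<close> by (simp add: cubic_mats_mult cubic_matsI)
  moreover have "k1*D^3/e \<noteq> 0"
    using \<open>k1*D^3 \<noteq> 0\<close> \<open>e \<noteq> 0\<close> by simp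
  ultimately show ?thesis
    using that by blast
qed

lemma Gq_eq:
  assumes "CARD('a::{field,finite}) > 5"
  shows "(Gq :: ('a^4^4) set set) = proj_class ` cubic_mats"
proof
  show "(Gq :: ('a^4^4) set set) \<subseteq> proj_class ` cubic_mats"
  proof
    fix \<phi> :: "('a^4^4) set" assume "\<phi> \<in> Gq"
    then obtain M where M: "\<phi> = proj_class M" "invertible M" "(\<lambda>x. x v* M) ` cubic_vecs = cubic_vecs"
      unfolding Gq_def by blast
    then obtain k A where "k \<noteq> 0" "A \<in> cubic_mats" "M = smat k A"
      using Gq_matrixE[OF assms] by metis
    then show "\<phi> \<in> proj_class ` cubic_mats"
      using M(1) proj_class_smat by blast
  qed
  show "proj_class ` cubic_mats \<subseteq> (Gq :: ('a^4^4) set set)"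
    using cubic_mats_in_Gq by blast
qed

lemma orbit_Gq_eq:
  assumes "CARD('a::{field,finite}) > 5" "L = line_through u (v::'a^4)"
  shows "orbit_Gq L = (\<lambda>A. mat_image A L) ` cubic_mats"
  unfolding orbit_Gq_def Gq_eq[OF assms(1)] using pmap_proj_class[OF assms(2)] by blast

lemma stab_Gq_eq:
  assumes "CARD('a::{field,finite}) > 5" "L = line_through u (v::'a^4)"
  shows "stab_Gq L = proj_class ` {A \<in> cubic_mats. mat_image A L = L}"
  unfolding stab_Gq_def Gq_eq[OF assms(1)] using pmap_proj_class[OF assms(2)] by blast

section \<open>U\<Gamma>-lines\<close>

text \<open>Homogeneous versions of \<open>osc\<close> and \<open>tangent\<close> at the point with parameter \<open>(x : y)\<close>; the
  tangent is spanned by the two partial derivatives of \<open>cubic_point\<close>.\<close>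

definition osc_plane :: "'a::field \<Rightarrow> 'a \<Rightarrow> 'a^4" where
  "osc_plane x y = pt (y^3) (-3*x*y^2) (3*x^2*y) (-(x^3))"

definition tangent_line :: "'a::field \<Rightarrow> 'a \<Rightarrow> ('a^4) set" where
  "tangent_line x y = line_through (pt (3*x^2) (2*x*y) (y^2) 0) (pt 0 (x^2) (2*x*y) (3*y^2))"

lemma line_in_plane_scalar_mult:
  "k \<noteq> 0 \<Longrightarrow> line_in_plane L (k *s c) \<longleftrightarrow> line_in_plane L c"
  by (simp add: line_in_plane_def pdot_scalar_mult)

lemma osc_eq_osc_plane:
  "osc t = (if t = None then -1 else 1) *s osc_plane (fst (hom_coords t)) (snd (hom_coords t))"
  by (cases t) (simp_all add: osc_plane_def)

lemma line_in_plane_osc: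
  "line_in_plane L (osc t) \<longleftrightarrow> line_in_plane L (osc_plane (fst (hom_coords t)) (snd (hom_coords t)))"
  by (simp add: osc_eq_osc_plane line_in_plane_scalar_mult)

lemma pdot_osc_plane_cubic_point: "pdot (osc_plane x y) (cubic_point p q) = (y*p - x*q)^3"
  unfolding osc_plane_def cubic_point_def pdot_pt by algebra

lemma osc_plane_scale: "osc_plane (l*x) (l*y) = l^3 *s osc_plane x y"
  unfolding osc_plane_def scalar_mult_pt pt_eq_iff by (intro conjI; algebra)

lemma pdot_osc_plane_mult_cubic_mat:
  "pdot (osc_plane (a*x+b*y) (c*x+d*y)) (v v* cubic_mat a b c d) = (a*d-b*c)^3 * pdot (osc_plane x y) v"
proof -
  obtain v1 v2 v3 v4 where v: "v = pt v1 v2 v3 v4"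
    using pt_eta by blast
  show ?thesis
    unfolding v osc_plane_def cubic_mat_def pt_vector_matrix_mult_mat4 pdot_pt by algebra
qed

lemma cpt_in_osc_iff: "pdot (osc t) (cpt r) = 0 \<longleftrightarrow> r = t"
proof -
  let ?d = "snd (hom_coords t) * fst (hom_coords r) - fst (hom_coords t) * snd (hom_coords r)"
  have "pdot (osc t) (cpt r) = (if t = None then -1 else 1) * ?d^3"
    by (simp add: osc_eq_osc_plane pdot_scalar_mult cpt_eq_cubic_point pdot_osc_plane_cubic_point)
  then have "pdot (osc t) (cpt r) = 0 \<longleftrightarrow> ?d = 0"
    by simp
  also have "\<dots> \<longleftrightarrow> r = t"
    using hom_coords_eq_iff[of r t] by (simp add: mult.commute)
  finally show ?thesis .
qed

lemma tangent_eq_tangent_line: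
  assumes "(3::'a::field) \<noteq> 0"
  shows "tangent t = tangent_line (fst (hom_coords t)) (snd (hom_coords (t::'a option)))"
proof (cases t)
  case None
  have "{x::'a^4. x $ 3 = 0 \<and> x $ 4 = 0} = line_through (pt 3 0 0 0) (pt 0 1 0 0)"
  proof (intro set_eqI iffI)
    fix x :: "'a^4" assume "x \<in> {x. x $ 3 = 0 \<and> x $ 4 = 0}"
    then have "x = (x$1/3) *s pt 3 0 0 0 + (x$2) *s pt 0 1 0 0"
      using assms by (simp add: vec4_eq_iff)
    then show "x \<in> line_through (pt 3 0 0 0) (pt 0 1 0 0)"
      unfolding in_line_through_iff by blast
  qed (auto simp: in_line_through_iff)
  then show ?thesis
    using None by (simp add: tangent_line_def)
next
  case (Some r)
  have "line_through (pt (r^3) (r^2) r 1) (pt (3*r^2) (2*r) 1 0) =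
        line_through (pt (3*r^2) (2*r*1) (1^2) 0) (pt 0 (r^2) (2*r*1) (3*1^2))"
    by (rule line_through_eqI[where \<alpha>="r/3" and \<beta>="1/3" and \<gamma>=1 and \<delta>=0])
       (use assms in \<open>simp_all add: field_simps power2_eq_square power3_eq_cube\<close>)
  then show ?thesis
    using Some by (simp add: tangent_line_def)
qed

lemma cubic_point_in_tangent_line:
  assumes "(3::'a::field) \<noteq> 0" shows "cubic_point x y \<in> tangent_line x (y::'a)"
proof -
  have "cubic_point x y = (x/3) *s pt (3*x^2) (2*x*y) (y^2) 0 + (y/3) *s pt 0 (x^2) (2*x*y) (3*y^2)"
    using assms by (simp add: cubic_point_def field_simps power2_eq_square power3_eq_cube)
  then show ?thesis
    unfolding tangent_line_def in_line_through_iff by blast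
qed

lemma tangent_line_scale: "l \<noteq> 0 \<Longrightarrow> tangent_line (l*x) (l*y) = tangent_line x (y::'a::field)"
  unfolding tangent_line_def
  by (rule line_through_eqI[where \<alpha>="l^2" and \<beta>=0 and \<gamma>=0 and \<delta>="l^2"])
     (simp_all add: power2_eq_square mult_ac)

lemma mat_image_tangent_line:
  assumes "a*d-b*c \<noteq> 0"
  shows "mat_image (cubic_mat a b c d) (tangent_line x y) = tangent_line (a*x+b*y) (c*x+d*y)"
  unfolding tangent_line_def mat_image_line_through
  by (rule line_through_eqI[where \<alpha>=a and \<beta>=c and \<gamma>=b and \<delta>=d])
     (unfold cubic_mat_def pt_vector_matrix_mult_mat4 scalar_mult_pt add_pt pt_eq_iff,
      (intro conjI; algebra)+, use assms in \<open>simp add: mult.commute\<close>)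

text \<open>\<open>UGamma_at x y L\<close> does not ask that \<open>L\<close> meet the cubic only once: this is automatic, as an
  osculating plane meets the cubic only at its point of osculation (\<open>cpt_in_osc_iff\<close>).\<close>

definition UGamma_at :: "'a::field \<Rightarrow> 'a \<Rightarrow> ('a^4) set \<Rightarrow> bool" where
  "UGamma_at x y L \<longleftrightarrow> (x \<noteq> 0 \<or> y \<noteq> 0) \<and> cubic_point x y \<in> L \<and> line_in_plane L (osc_plane x y)
     \<and> L \<noteq> tangent_line x y"

lemma UGamma_at_scale:
  assumes "is_line L" "l \<noteq> 0" shows "UGamma_at (l*x) (l*y) L \<longleftrightarrow> UGamma_at x y L"
proof -
  have "cubic_point (l*x) (l*y) \<in> L \<longleftrightarrow> cubic_point x y \<in> L"
  proof
    assume "cubic_point (l*x) (l*y) \<in> L"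
    then have "(1/l^3) *s (l^3 *s cubic_point x y) \<in> L"
      using is_line_scalar_mult_closed[OF assms(1)] by (simp only: cubic_point_scale)
    then show "cubic_point x y \<in> L"
      using assms(2) by (simp only: vector_smult_assoc) simp
  qed (simp add: cubic_point_scale is_line_scalar_mult_closed[OF assms(1)])
  then show ?thesis
    using assms(2) by (simp add: UGamma_at_def osc_plane_scale line_in_plane_scalar_mult tangent_line_scale)
qed

lemma UGamma_at_hom_coords:
  assumes "is_line L" "UGamma_at x y L"
  obtains t where "UGamma_at (fst (hom_coords t)) (snd (hom_coords t)) L"
proof -
  obtain t l where "l \<noteq> 0" "x = l * fst (hom_coords t)" "y = l * snd (hom_coords t)"
    by (rule hom_coords_cases[of x y]) (use assms(2) UGamma_at_def in blast)
  then show ?thesis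
    using that UGamma_at_scale[OF assms(1)] assms(2) by blast
qed

lemma UGamma_lineE:
  assumes three: "(3::'a::{field,finite}) \<noteq> 0" and "UGamma_line (L::('a^4) set)"
  obtains t where "UGamma_at (fst (hom_coords t)) (snd (hom_coords t)) L"
proof -
  have "card {t. on_line (cpt t) L} = 1" and tan: "\<forall>t. L \<noteq> tangent t"
    and "\<exists>t. line_in_plane L (osc t)"
    using assms(2) unfolding UGamma_line_def by blast+
  then obtain t t0 where osc: "line_in_plane L (osc t)" and "{t. on_line (cpt t) L} = {t0}"
    using card_1_singletonE by metis
  then have "cpt t0 \<in> L"
    unfolding on_line_def by blast
  moreover from this have "t0 = t"
    using osc cpt_in_osc_iff unfolding line_in_plane_def by blast
  ultimately have "UGamma_at (fst (hom_coords t)) (snd (hom_coords t)) L"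
    unfolding UGamma_at_def using hom_coords_nonzero osc tan tangent_eq_tangent_line[OF three]
    by (simp add: cpt_eq_cubic_point line_in_plane_osc[symmetric])
  then show ?thesis
    by (rule that)
qed

lemma UGamma_line_if_UGamma_at:
  assumes three: "(3::'a::{field,finite}) \<noteq> 0" and line: "is_line (L::('a^4) set)"
    and "UGamma_at (fst (hom_coords t)) (snd (hom_coords t)) L"
  shows "UGamma_line L"
proof -
  have "cpt t \<in> L" and osc: "line_in_plane L (osc t)" and "L \<noteq> tangent t"
    using assms(3) unfolding UGamma_at_def
    by (simp_all add: cpt_eq_cubic_point line_in_plane_osc tangent_eq_tangent_line[OF three])
  have on_line: "on_line (cpt s) L \<longleftrightarrow> s = t" for s
    using \<open>cpt t \<in> L\<close> osc cpt_in_osc_iff cpt_nonzero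
    unfolding on_line_def line_in_plane_def by blast
  then have "card {s. on_line (cpt s) L} = 1"
    by simp
  moreover have "L \<noteq> tangent s" for s
  proof
    assume "L = tangent s"
    moreover have "cpt s \<in> tangent s"
      using cubic_point_in_tangent_line[OF three]
      by (simp add: cpt_eq_cubic_point tangent_eq_tangent_line[OF three])
    ultimately have "s = t"
      using on_line cpt_nonzero unfolding on_line_def by blast
    then show False
      using \<open>L \<noteq> tangent t\<close> \<open>L = tangent s\<close> by simp
  qed
  ultimately show "UGamma_line L"
    unfolding UGamma_line_def using line osc by blast
qed

lemma UGamma_line_iff:
  assumes three: "(3::'a::{field,finite}) \<noteq> 0"
  shows "UGamma_line (L::('a^4) set) \<longleftrightarrow> is_line L \<and> (\<exists>x y. UGamma_at x y L)"
proof
  assume "UGamma_line L"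
  then show "is_line L \<and> (\<exists>x y. UGamma_at x y L)"
    using UGamma_lineE[OF three] unfolding UGamma_line_def by metis
next
  assume "is_line L \<and> (\<exists>x y. UGamma_at x y L)"
  then obtain x y where line: "is_line L" and "UGamma_at x y L"
    by blast
  then obtain t where "UGamma_at (fst (hom_coords t)) (snd (hom_coords t)) L"
    by (rule UGamma_at_hom_coords)
  then show "UGamma_line L"
    by (rule UGamma_line_if_UGamma_at[OF three line])
qed

lemma UGamma_at_mat_image:
  assumes "a*d-b*c \<noteq> 0" "UGamma_at x y L"
  shows "UGamma_at (a*x+b*y) (c*x+d*y) (mat_image (cubic_mat a b c d) L)"
proof -
  let ?A = "cubic_mat a b c d"
  have "a*x+b*y \<noteq> 0 \<or> c*x+d*y \<noteq> 0"
    using assms nonsingular_image_nonzero unfolding UGamma_at_def by blast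
  moreover have "cubic_point (a*x+b*y) (c*x+d*y) \<in> mat_image ?A L"
    using assms(2) unfolding UGamma_at_def mat_image_def by (metis image_eqI cubic_point_mult_cubic_mat)
  moreover have "line_in_plane (mat_image ?A L) (osc_plane (a*x+b*y) (c*x+d*y))"
    using assms(2) unfolding UGamma_at_def line_in_plane_def mat_image_def
    by (auto simp: pdot_osc_plane_mult_cubic_mat)
  moreover have "mat_image ?A L \<noteq> tangent_line (a*x+b*y) (c*x+d*y)"
  proof
    assume "mat_image ?A L = tangent_line (a*x+b*y) (c*x+d*y)"
    then have "mat_image ?A L = mat_image ?A (tangent_line x y)"
      using mat_image_tangent_line[OF assms(1)] by simp
    then have "L = tangent_line x y"
      using mat_image_inj cubic_matsI[OF assms(1)] by blast
    then show False
      using assms(2) unfolding UGamma_at_def by blast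
  qed
  ultimately show ?thesis
    unfolding UGamma_at_def by blast
qed

lemma UGamma_line_mat_image:
  assumes "(3::'a::{field,finite}) \<noteq> 0" "A \<in> cubic_mats" "UGamma_line (L::('a^4) set)"
  shows "UGamma_line (mat_image A L)"
proof -
  obtain a b c d where "A = cubic_mat a b c d" "a*d-b*c \<noteq> 0"
    using assms(2) unfolding cubic_mats_def by blast
  then show ?thesis
    using assms UGamma_line_iff is_line_mat_image UGamma_at_mat_image by metis
qed

text \<open>The lines through \<open>P\<^sub>0 = P(0,0,0,1)\<close> in its osculating plane \<open>x\<^sub>0 = 0\<close>, other than the
  tangent \<open>x\<^sub>0 = x\<^sub>1 = 0\<close>.\<close>

definition osc_pencil :: "'a::field \<Rightarrow> ('a^4) set" where
  "osc_pencil y = line_through (pt 0 0 0 1) (pt 0 1 y 0)"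

lemma is_line_osc_pencil: "is_line (osc_pencil y)"
  unfolding is_line_def osc_pencil_def proportional_def
  by (rule exI[of _ "pt 0 0 0 1"], rule exI[of _ "pt 0 1 y 0"]) simp

lemma osc_pencil_inj:
  assumes "osc_pencil y = osc_pencil y'" shows "y = y'"
proof -
  have "pt 0 1 y 0 \<in> osc_pencil y'"
    using assms line_through_generators(2) unfolding osc_pencil_def by metis
  then show ?thesis
    unfolding osc_pencil_def in_line_through_iff by auto
qed

lemma is_line_eq_line_through_point:
  assumes "is_line L" "p \<in> L" "p \<noteq> 0"
  obtains w where "w \<in> L" "L = line_through p w"
proof -
  obtain u v where L: "L = line_through u v"
    using assms(1) unfolding is_line_def by blast
  obtain \<alpha> \<beta> where p: "p = \<alpha> *s u + \<beta> *s v"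
    using assms(2) L in_line_through_iff by blast
  show ?thesis
  proof (cases "\<beta> = 0")
    case False
    have "line_through p u = line_through u v"
      by (rule line_through_eqI[where \<alpha>=\<alpha> and \<beta>=\<beta> and \<gamma>=1 and \<delta>=0]) (use p False in simp_all)
    then show ?thesis
      using that[of u] L line_through_generators(2) by metis
  next
    case True
    then have "\<alpha> \<noteq> 0"
      using p assms(3) by auto
    have "line_through p v = line_through u v"
      by (rule line_through_eqI[where \<alpha>=\<alpha> and \<beta>=\<beta> and \<gamma>=0 and \<delta>=1])
         (use p True \<open>\<alpha> \<noteq> 0\<close> in simp_all)
    then show ?thesis
      using that[of v] L line_through_generators(2) by metis
  qed
qed

lemma not_is_line_line_through_0: "\<not> is_line (line_through p (0::'a::field^4))"
proof
  assume "is_line (line_through p 0)"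
  then obtain u v where uv: "u \<noteq> 0" "v \<noteq> 0" "\<not> proportional u v" "line_through p 0 = line_through u v"
    unfolding is_line_def by blast
  then have "u \<in> line_through p 0" "v \<in> line_through p 0"
    by (simp_all add: line_through_generators)
  then obtain a b where "u = a *s p" "v = b *s p"
    unfolding in_line_through_iff by auto
  then have "v = (b/a) *s u" "b/a \<noteq> 0"
    using uv(1,2) by auto
  then show False
    using uv(3) unfolding proportional_def by blast
qed

lemma pdot_osc_plane_0_1: "pdot (osc_plane 0 1) w = w$1"
  by (simp add: osc_plane_def pdot_def sum_4)

lemma UGamma_at_osc_pencil: "UGamma_at 0 1 (osc_pencil (y::'a::field))"
proof -
  have "cubic_point 0 1 \<in> osc_pencil y"
    unfolding osc_pencil_def cubic_point_def by (simp add: line_through_generators)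
  moreover have "line_in_plane (osc_pencil y) (osc_plane 0 1)"
    unfolding line_in_plane_def osc_pencil_def pdot_osc_plane_0_1 by (auto simp: in_line_through_iff)
  moreover have "osc_pencil y \<noteq> tangent_line 0 1"
  proof
    assume "osc_pencil y = tangent_line 0 1"
    moreover have "pt 0 1 y 0 \<in> osc_pencil y"
      unfolding osc_pencil_def by (rule line_through_generators(2))
    ultimately have "pt 0 1 y 0 \<in> line_through (pt 0 0 1 0) (pt 0 0 0 3)"
      by (simp add: tangent_line_def)
    then show False
      unfolding in_line_through_iff by auto
  qed
  ultimately show ?thesis
    unfolding UGamma_at_def by simp
qed

lemma lines_through_P0_in_osc_plane:
  fixes L :: "('a::field^4) set"
  assumes "is_line L" "pt 0 0 0 1 \<in> L" "line_in_plane L (osc_plane 0 1)"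
  obtains b c where "L = line_through (pt 0 0 0 1) (pt 0 b c 0)"
proof -
  obtain w where "w \<in> L" and L: "L = line_through (pt 0 0 0 1) w"
    by (rule is_line_eq_line_through_point[OF assms(1,2)]) simp
  then have "w$1 = 0"
    using assms(3) unfolding line_in_plane_def pdot_osc_plane_0_1 by blast
  then have "pt 0 (w$2) (w$3) 0 = w + (-(w$4)) *s pt 0 0 0 1"
    by (subst (2) pt_eta) simp
  then show ?thesis
    using that[of "w$2" "w$3"] L line_through_add_multiple by metis
qed

lemma UGamma_at_0_1_iff:
  assumes three: "(3::'a::field) \<noteq> 0" and line: "is_line L"
  shows "UGamma_at 0 1 (L::('a^4) set) \<longleftrightarrow> (\<exists>y. L = osc_pencil y)"
proof
  assume UG: "UGamma_at 0 1 L"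
  then have "pt 0 0 0 1 \<in> L" "line_in_plane L (osc_plane 0 1)"
    by (simp_all add: UGamma_at_def cubic_point_def)
  then obtain b c :: 'a where L: "L = line_through (pt 0 0 0 1) (pt 0 b c 0)"
    by (rule lines_through_P0_in_osc_plane[OF line])
  consider "b \<noteq> 0" | "b = 0" "c \<noteq> 0" | "b = 0" "c = 0"
    by blast
  then show "\<exists>y. L = osc_pencil y"
  proof cases
    case 1
    have "pt 0 b c 0 = b *s pt 0 1 (c/b) 0"
      using 1 by simp
    then have "L = osc_pencil (c/b)"
      unfolding L osc_pencil_def using line_through_scale_right 1 by metis
    then show ?thesis
      by blast
  next
    case 2
    have "tangent_line 0 1 = line_through (pt 0 0 1 0) (pt 0 0 0 (3::'a))"
      by (simp add: tangent_line_def)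
    also have "\<dots> = L"
      unfolding L using 2 three
      by (intro line_through_eqI[where \<alpha>=0 and \<beta>="1/c" and \<gamma>=3 and \<delta>=0]) simp_all
    finally show ?thesis
      using UG unfolding UGamma_at_def by simp
  next
    case 3
    then show ?thesis
      using L line not_is_line_line_through_0 by (metis pt_eq_0_iff)
  qed
qed (use UGamma_at_osc_pencil in blast)

text \<open>\<open>frame_mat t\<close> maps \<open>P\<^sub>0\<close> to \<open>P\<^sub>t\<close>.\<close>

fun frame_mat :: "'a::field option \<Rightarrow> 'a^4^4" where
  "frame_mat (Some s) = cubic_mat 1 s 0 1"
| "frame_mat None = cubic_mat 0 1 1 0"

lemma frame_matE:
  obtains a c where "frame_mat t = cubic_mat a (fst (hom_coords t)) c (snd (hom_coords t))"
    "a * snd (hom_coords t) - fst (hom_coords t) * c \<noteq> 0"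
proof (cases t)
  case None
  then show ?thesis using that[of 0 1] by simp
next
  case (Some s)
  then show ?thesis using that[of 1 0] by simp
qed

lemma frame_mat_in_cubic_mats: "frame_mat t \<in> cubic_mats"
  by (metis frame_matE cubic_matsI)

lemma UGamma_at_frame_mat:
  "UGamma_at (fst (hom_coords t)) (snd (hom_coords t)) (mat_image (frame_mat t) (osc_pencil y))"
proof -
  obtain a c where "frame_mat t = cubic_mat a (fst (hom_coords t)) c (snd (hom_coords t))"
    "a * snd (hom_coords t) - fst (hom_coords t) * c \<noteq> 0"
    by (rule frame_matE)
  then show ?thesis
    using UGamma_at_mat_image[OF _ UGamma_at_osc_pencil] by fastforce
qed

lemma UGamma_at_normal_form:
  assumes three: "(3::'a::field) \<noteq> 0" and line: "is_line L" and "UGamma_at x y (L::('a^4) set)"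
  obtains t y' where "L = mat_image (frame_mat t) (osc_pencil y')"
proof -
  obtain t where UG: "UGamma_at (fst (hom_coords t)) (snd (hom_coords t)) L"
    by (rule UGamma_at_hom_coords[OF line assms(3)])
  define b where "b = fst (hom_coords t)"
  define d where "d = snd (hom_coords t)"
  obtain a c where F: "frame_mat t = cubic_mat a b c d" and det: "a*d - b*c \<noteq> 0"
    unfolding b_def d_def by (rule frame_matE)
  define B where "B = cubic_mat d (-b) (-c) a"
  have det': "d*a - (-b)*(-c) \<noteq> 0"
    using det by (simp add: mult.commute)
  have "UGamma_at (d*b + (-b)*d) ((-c)*b + a*d) (mat_image B L)"
    unfolding B_def by (rule UGamma_at_mat_image[OF det' UG[folded b_def d_def]])
  then have "UGamma_at ((a*d-b*c) * 0) ((a*d-b*c) * 1) (mat_image B L)"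
    by (simp add: algebra_simps)
  moreover have "is_line (mat_image B L)"
    unfolding B_def using is_line_mat_image[OF cubic_matsI[OF det'] line] .
  ultimately obtain y' where "mat_image B L = osc_pencil y'"
    using UGamma_at_scale det UGamma_at_0_1_iff[OF three] by metis
  moreover have "mat_image (frame_mat t) (mat_image B L) = L"
    unfolding F B_def using det by (intro mat_image_scalar_inverse[OF cubic_mat_adjugate(2) _ line]) simp
  ultimately show ?thesis
    using that by metis
qed

lemma UGamma_line_osc_pencil: "(3::'a::{field,finite}) \<noteq> 0 \<Longrightarrow> UGamma_line (osc_pencil (y::'a))"
  using UGamma_line_iff is_line_osc_pencil UGamma_at_osc_pencil by blast

lemma UGamma_lines_eq:
  assumes "(3::'a::{field,finite}) \<noteq> 0"
  shows "{L. UGamma_line L} = (\<lambda>(t, y). mat_image (frame_mat t) (osc_pencil (y::'a))) ` UNIV"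
proof
  show "{L. UGamma_line L} \<subseteq> (\<lambda>(t, y). mat_image (frame_mat t) (osc_pencil (y::'a))) ` UNIV"
  proof
    fix L :: "('a^4) set" assume "L \<in> {L. UGamma_line L}"
    then obtain x y where "is_line L" "UGamma_at x y L"
      using UGamma_line_iff[OF assms] by blast
    then obtain t y' where "L = mat_image (frame_mat t) (osc_pencil y')"
      by (rule UGamma_at_normal_form[OF assms])
    then show "L \<in> (\<lambda>(t, y). mat_image (frame_mat t) (osc_pencil y)) ` UNIV"
      by auto
  qed
  show "(\<lambda>(t, y). mat_image (frame_mat t) (osc_pencil (y::'a))) ` UNIV \<subseteq> {L. UGamma_line L}"
    using UGamma_line_mat_image[OF assms frame_mat_in_cubic_mats UGamma_line_osc_pencil[OF assms]]
    by auto
qed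

lemma UGamma_at_unique:
  assumes "UGamma_at x y L" "UGamma_at x' y' L" shows "x*y' = x'*y"
proof -
  have "cubic_point x' y' \<in> L" "line_in_plane L (osc_plane x y)"
    using assms unfolding UGamma_at_def by blast+
  then have "(y*x' - x*y')^3 = 0"
    unfolding line_in_plane_def pdot_osc_plane_cubic_point[symmetric] by blast
  then show ?thesis
    by (simp add: algebra_simps)
qed

lemma inj_frame_mat_osc_pencil: "inj (\<lambda>(t, y). mat_image (frame_mat t) (osc_pencil (y::'a::field)))"
proof (rule injI, clarify)
  fix t y t' y'
  assume eq: "mat_image (frame_mat t) (osc_pencil (y::'a)) = mat_image (frame_mat t') (osc_pencil y')"
  have "t = t'"
    using UGamma_at_unique[OF UGamma_at_frame_mat UGamma_at_frame_mat[of t' y', folded eq]]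
      hom_coords_eq_iff by blast
  then have "osc_pencil y = osc_pencil y'"
    using eq mat_image_inj[OF frame_mat_in_cubic_mats] by blast
  with \<open>t = t'\<close> show "t = t' \<and> y = y'"
    using osc_pencil_inj by blast
qed

lemma card_UGamma_lines:
  assumes "(3::'a::{field,finite}) \<noteq> 0"
  shows "card {L::('a^4) set. UGamma_line L} = (CARD('a) + 1) * CARD('a)"
  unfolding UGamma_lines_eq[OF assms] card_image[OF inj_frame_mat_osc_pencil]
  by (simp add: card_cartesian_product)

section \<open>Orbits and stabilisers\<close>

definition regulus_line :: "'a::field \<Rightarrow> 'a \<Rightarrow> ('a^4) set" where
  "regulus_line b d = line_through (pt b d 0 0) (pt 0 0 b d)"

definition regulus_lines :: "('a::field^4) set set" where
  "regulus_lines = {regulus_line b d | b d. b \<noteq> 0 \<or> d \<noteq> 0}"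

lemma regulus_line_scale: "l \<noteq> 0 \<Longrightarrow> regulus_line (l*b) (l*d) = regulus_line b d"
  using line_through_scale_left[of l "pt b d 0 0"] line_through_scale_right[of l _ "pt 0 0 b d"]
  by (simp add: regulus_line_def)

lemma regulus_line_eqD:
  assumes "regulus_line b d = regulus_line b' d'" shows "b*d' = b'*d"
proof -
  have "pt b d 0 0 \<in> regulus_line b' d'"
    using assms line_through_generators(1) unfolding regulus_line_def by metis
  then obtain \<alpha> where "b = \<alpha>*b'" "d = \<alpha>*d'"
    unfolding regulus_line_def in_line_through_iff by auto
  then show ?thesis
    by simp
qed

lemma is_line_regulus_line: "b \<noteq> 0 \<or> d \<noteq> 0 \<Longrightarrow> is_line (regulus_line b d)"
  unfolding is_line_def regulus_line_def proportional_def
  by (rule exI[of _ "pt b d 0 0"], rule exI[of _ "pt 0 0 b d"]) auto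

lemma regulus_lines_eq_range:
  "regulus_lines = range (\<lambda>t. regulus_line (fst (hom_coords t)) (snd (hom_coords (t::'a::field option))))"
proof (intro set_eqI iffI)
  fix L :: "('a^4) set" assume "L \<in> regulus_lines"
  then obtain b d where bd: "b \<noteq> 0 \<or> d \<noteq> 0" "L = regulus_line b d"
    unfolding regulus_lines_def by blast
  obtain t l where "l \<noteq> 0" "b = l * fst (hom_coords t)" "d = l * snd (hom_coords t)"
    by (rule hom_coords_cases[OF bd(1)])
  then have "L = regulus_line (fst (hom_coords t)) (snd (hom_coords t))"
    using bd(2) regulus_line_scale by simp
  then show "L \<in> range (\<lambda>t. regulus_line (fst (hom_coords t)) (snd (hom_coords t)))"
    by blast
qed (use hom_coords_nonzero in \<open>auto simp: regulus_lines_def\<close>)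

lemma card_regulus_lines: "card (regulus_lines :: ('a::{field,finite}^4) set set) = CARD('a) + 1"
proof -
  have "inj (\<lambda>t. regulus_line (fst (hom_coords t)) (snd (hom_coords (t::'a option))))"
    by (rule injI) (use regulus_line_eqD hom_coords_eq_iff in metis)
  then show ?thesis
    unfolding regulus_lines_eq_range by (simp add: card_image)
qed

lemma mat_image_ell1:
  assumes two: "(2::'a::field) = 0" and det: "a*d-b*c \<noteq> 0"
  shows "mat_image (cubic_mat a b c d) ell1 = regulus_line b (d::'a)"
proof -
  have three: "(3::'a) = 1"
    using three_eq_one_if_two_eq_zero[OF two] .
  have "pt 0 0 0 1 v* cubic_mat a b c d = b^2 *s pt b d 0 0 + d^2 *s pt 0 0 b d"
    unfolding cubic_mat_def pt_vector_matrix_mult_mat4 scalar_mult_pt add_pt pt_eq_iff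
    by (intro conjI; algebra)
  moreover have "pt 0 1 0 0 v* cubic_mat a b c d = a^2 *s pt b d 0 0 + c^2 *s pt 0 0 b d"
    unfolding cubic_mat_def pt_vector_matrix_mult_mat4 scalar_mult_pt add_pt pt_eq_iff
    by (simp add: two three algebra_simps power2_eq_square)
  moreover have "b^2*c^2 - d^2*a^2 = (a*d-b*c)^2 + 2*(a*b*c*d - a^2*d^2)"
    by algebra
  then have "b^2*c^2 - d^2*a^2 \<noteq> 0"
    using det two by simp
  ultimately show ?thesis
    unfolding ell1_def mat_image_line_through regulus_line_def by (rule line_through_eqI)
qed

lemma orbit_Gq_ell1:
  assumes "(2::'a::{field,finite}) = 0" "CARD('a) > 5"
  shows "orbit_Gq (ell1::('a^4) set) = regulus_lines"
proof -
  have "(\<lambda>A. mat_image A ell1) ` cubic_mats = (regulus_lines :: ('a^4) set set)"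
  proof (intro set_eqI iffI)
    fix L assume "L \<in> (\<lambda>A. mat_image A ell1) ` (cubic_mats :: ('a^4^4) set)"
    then obtain a b c d where "a*d-b*c \<noteq> (0::'a)" "L = mat_image (cubic_mat a b c d) ell1"
      unfolding cubic_mats_def by blast
    moreover from this have "b \<noteq> 0 \<or> d \<noteq> 0"
      by auto
    ultimately show "L \<in> regulus_lines"
      unfolding regulus_lines_def using mat_image_ell1[OF assms(1)] by blast
  next
    fix L assume "L \<in> (regulus_lines :: ('a^4) set set)"
    then obtain t where "L = regulus_line (fst (hom_coords t)) (snd (hom_coords t))"
      unfolding regulus_lines_eq_range by blast
    moreover obtain a c where "frame_mat t = cubic_mat a (fst (hom_coords t)) c (snd (hom_coords t))"
      "a * snd (hom_coords t) - fst (hom_coords t) * c \<noteq> 0"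
      by (rule frame_matE)
    ultimately have "L = mat_image (frame_mat t) ell1"
      using mat_image_ell1[OF assms(1)] by simp
    then show "L \<in> (\<lambda>A. mat_image A ell1) ` cubic_mats"
      using frame_mat_in_cubic_mats by blast
  qed
  then show ?thesis
    using orbit_Gq_eq[OF assms(2)] ell1_def by metis
qed

text \<open>In characteristic two the tangent at \<open>(x : y)\<close> meets \<open>regulus_line b d\<close> in
  \<open>(x\<^sup>2b, x\<^sup>2d, y\<^sup>2b, y\<^sup>2d)\<close>.\<close>

lemma regulus_line_meets_tangents:
  assumes two: "(2::'a::field) = 0" and "b \<noteq> 0 \<or> d \<noteq> (0::'a)"
  shows "lines_meet (regulus_line b d) (tangent t)"
proof -
  have three: "(3::'a) = 1"
    using three_eq_one_if_two_eq_zero[OF two] .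
  then have three_ne: "(3::'a) \<noteq> 0"
    by simp
  define x where "x = fst (hom_coords t)"
  define y where "y = snd (hom_coords t)"
  define z where "z = pt (x^2*b) (x^2*d) (y^2*b) (y^2*d)"
  have "z = x^2 *s pt b d 0 0 + y^2 *s pt 0 0 b d"
    by (simp add: z_def mult_ac)
  then have "z \<in> regulus_line b d"
    unfolding regulus_line_def in_line_through_iff by blast
  moreover have "z = b *s pt (3*x^2) (2*x*y) (y^2) 0 + d *s pt 0 (x^2) (2*x*y) (3*y^2)"
    by (simp add: z_def three two mult_ac)
  then have "z \<in> tangent t"
    unfolding tangent_eq_tangent_line[of t, OF three_ne] x_def y_def tangent_line_def in_line_through_iff
    by blast
  moreover have "z \<noteq> 0"
    using hom_coords_nonzero[of t] assms(2) by (auto simp: z_def x_def y_def)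
  ultimately show ?thesis
    unfolding lines_meet_def on_line_def by blast
qed

lemma lines_meet_tangent_None:
  assumes "lines_meet L (tangent None)"
  obtains u1 u2 where "pt u1 u2 0 0 \<in> L" "u1 \<noteq> 0 \<or> u2 \<noteq> (0::'a::field)"
proof -
  obtain z where "z \<noteq> 0" "z \<in> L" "z$3 = 0" "z$4 = 0"
    using assms unfolding lines_meet_def on_line_def by auto
  then show ?thesis
    using that[of "z$1" "z$2"] pt_eta[of z] by (metis pt_eq_0_iff)
qed

lemma lines_meet_tangent_Some_0:
  assumes "lines_meet L (tangent (Some 0))"
  obtains w1 w2 where "pt 0 0 w1 w2 \<in> L" "w1 \<noteq> 0 \<or> w2 \<noteq> (0::'a::field)"
proof -
  obtain z where "z \<noteq> 0" "z \<in> L" "z \<in> line_through (pt 0 0 0 1) (pt 0 0 1 0)"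
    using assms unfolding lines_meet_def on_line_def by auto
  then obtain \<alpha> \<beta> where "pt 0 0 \<beta> \<alpha> \<in> L" "pt 0 0 \<beta> \<alpha> \<noteq> 0"
    unfolding in_line_through_iff by auto
  then show ?thesis
    using that by simp
qed

lemma lines_meet_tangent_Some_1:
  fixes u1 u2 w1 w2 :: "'a::field"
  assumes two: "(2::'a) = 0"
    and meet: "lines_meet (line_through (pt u1 u2 0 0) (pt 0 0 w1 w2)) (tangent (Some 1))"
    and "u1 \<noteq> 0 \<or> u2 \<noteq> 0" "w1 \<noteq> 0 \<or> w2 \<noteq> 0"
  obtains k where "k \<noteq> 0" "pt 0 0 w1 w2 = k *s pt 0 0 u1 u2"
proof -
  obtain z where z: "z \<noteq> 0" "z \<in> line_through (pt u1 u2 0 0) (pt 0 0 w1 w2)" "z \<in> tangent (Some 1)"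
    using meet unfolding lines_meet_def on_line_def by blast
  obtain \<kappa> \<mu> where "z = \<kappa> *s pt u1 u2 0 0 + \<mu> *s pt 0 0 w1 w2"
    using z(2) in_line_through_iff by blast
  then have z_eq: "z = pt (\<kappa>*u1) (\<kappa>*u2) (\<mu> * w1) (\<mu> * w2)"
    by simp
  obtain \<rho> \<sigma> where "z = \<rho> *s pt 1 1 1 1 + \<sigma> *s pt 3 2 1 0"
    using z(3) by (auto simp: in_line_through_iff)
  then have "z = pt (\<rho>+\<sigma>) \<rho> (\<rho>+\<sigma>) \<rho>"
    using three_eq_one_if_two_eq_zero[OF two] two by simp
  then have "\<kappa>*u1 = \<rho>+\<sigma>" "\<mu> * w1 = \<rho>+\<sigma>" "\<kappa>*u2 = \<rho>" "\<mu> * w2 = \<rho>"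
    unfolding z_eq by simp_all
  then have e: "\<kappa>*u1 = \<mu> * w1" "\<kappa>*u2 = \<mu> * w2"
    by simp_all
  have "\<kappa> \<noteq> 0" "\<mu> \<noteq> 0"
    using e z(1) z_eq assms(3,4) by auto
  then show ?thesis
    using e by (intro that[of "\<kappa>/\<mu>"]) (simp_all add: field_simps)
qed

text \<open>Already the tangents at \<open>P\<^sub>\<infinity>\<close>, \<open>P\<^sub>0\<close> and \<open>P\<^sub>1\<close> force a line to be a regulus line.\<close>

lemma compl_tangent_regulus_subset:
  assumes two: "(2::'a::field) = 0"
  shows "compl_tangent_regulus \<subseteq> (regulus_lines :: ('a^4) set set)"
proof
  fix L :: "('a^4) set" assume L: "L \<in> compl_tangent_regulus"
  then have line: "is_line L" and meet: "\<And>t. lines_meet L (tangent t)"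
    unfolding compl_tangent_regulus_def by blast+
  obtain p q where pq: "L = line_through p q"
    using line unfolding is_line_def by blast
  obtain u1 u2 where z1: "pt u1 u2 0 0 \<in> L" "u1 \<noteq> 0 \<or> u2 \<noteq> 0"
    by (rule lines_meet_tangent_None[OF meet])
  obtain w1 w2 where z2: "pt 0 0 w1 w2 \<in> L" "w1 \<noteq> 0 \<or> w2 \<noteq> 0"
    by (rule lines_meet_tangent_Some_0[OF meet])
  have "\<not> proportional (pt u1 u2 0 0) (pt 0 0 w1 w2)"
    using z2(2) unfolding proportional_def by auto
  then have L2: "L = line_through (pt u1 u2 0 0) (pt 0 0 w1 w2)"
    using line_through_eq_span[OF pq z1(1) z2(1)] z1(2) z2(2) by simp
  obtain k where "k \<noteq> 0" "pt 0 0 w1 w2 = k *s pt 0 0 u1 u2"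
    by (rule lines_meet_tangent_Some_1[OF two meet[of "Some 1", unfolded L2] z1(2) z2(2)])
  then have "L = regulus_line u1 u2"
    unfolding L2 regulus_line_def using line_through_scale_right by metis
  then show "L \<in> regulus_lines"
    unfolding regulus_lines_def using z1(2) by blast
qed

lemma compl_tangent_regulus_eq:
  assumes "(2::'a::field) = 0"
  shows "compl_tangent_regulus = (regulus_lines :: ('a^4) set set)"
  using compl_tangent_regulus_subset[OF assms] regulus_line_meets_tangents[OF assms]
    is_line_regulus_line
  unfolding compl_tangent_regulus_def regulus_lines_def by blast

lemma ell1_eq_osc_pencil: "ell1 = osc_pencil 0"
  by (simp add: ell1_def osc_pencil_def)

lemma ell2_eq_osc_pencil: "ell2 = osc_pencil 1"
  by (simp add: ell2_def osc_pencil_def)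

lemma osc_pencil_eq_mat_image_ell2:
  assumes "y \<noteq> 0" shows "osc_pencil y = mat_image (cubic_mat 1 0 0 y) ell2"
proof -
  have "mat_image (cubic_mat 1 0 0 y) ell2 = line_through (pt 0 0 0 (y^3)) (pt 0 y (y^2) 0)"
    unfolding ell2_def mat_image_line_through by (simp add: cubic_mat_def)
  also have "\<dots> = osc_pencil y"
    unfolding osc_pencil_def
    by (rule line_through_eqI[where \<alpha>="y^3" and \<beta>=0 and \<gamma>=0 and \<delta>=y])
       (use assms in \<open>simp_all add: power2_eq_square\<close>)
  finally show ?thesis
    by simp
qed

lemma orbit_Gq_ell1_ell2:
  assumes "CARD('a::{field,finite}) > 5"
  shows "orbit_Gq (ell1 :: ('a^4) set) = (\<lambda>A. mat_image A (osc_pencil 0)) ` cubic_mats"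
    and "orbit_Gq (ell2 :: ('a^4) set) = (\<lambda>A. mat_image A (osc_pencil 1)) ` cubic_mats"
  using orbit_Gq_eq[OF assms ell1_def] orbit_Gq_eq[OF assms ell2_def]
  by (simp_all only: ell1_eq_osc_pencil ell2_eq_osc_pencil)

lemma frame_mat_osc_pencil_in_orbits:
  assumes "CARD('a::{field,finite}) > 5"
  shows "mat_image (frame_mat t) (osc_pencil (y::'a)) \<in> orbit_Gq ell1 \<union> orbit_Gq ell2"
proof (cases "y = 0")
  case True
  have "mat_image (frame_mat t) (osc_pencil y) \<in> orbit_Gq ell1"
    unfolding orbit_Gq_ell1_ell2[OF assms] True by (rule imageI[OF frame_mat_in_cubic_mats])
  then show ?thesis
    by (rule UnI1)
next
  case False
  have "mat_image (frame_mat t) (osc_pencil y) = mat_image (frame_mat t) (mat_image (cubic_mat 1 0 0 y) ell2)"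
    by (simp only: osc_pencil_eq_mat_image_ell2[OF False])
  then have "mat_image (frame_mat t) (osc_pencil y) = mat_image (cubic_mat 1 0 0 y ** frame_mat t) (osc_pencil 1)"
    by (simp add: mat_image_mat_image ell2_eq_osc_pencil)
  moreover have "cubic_mat 1 0 0 y ** frame_mat t \<in> cubic_mats"
    using False by (simp add: cubic_mats_mult cubic_matsI frame_mat_in_cubic_mats)
  ultimately have "mat_image (frame_mat t) (osc_pencil y) \<in> orbit_Gq ell2"
    unfolding orbit_Gq_ell1_ell2[OF assms] by (rule image_eqI)
  then show ?thesis
    by (rule UnI2)
qed

lemma UGamma_lines_eq_orbits:
  assumes "(3::'a::{field,finite}) \<noteq> 0" "CARD('a) > 5"
  shows "{L. UGamma_line L} = orbit_Gq (ell1 :: ('a^4) set) \<union> orbit_Gq ell2"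
proof
  show "{L. UGamma_line L} \<subseteq> orbit_Gq (ell1 :: ('a^4) set) \<union> orbit_Gq ell2"
    unfolding UGamma_lines_eq[OF assms(1)] using frame_mat_osc_pencil_in_orbits[OF assms(2)] by auto
  have "UGamma_line (mat_image A (osc_pencil y))" if "A \<in> cubic_mats" for A and y :: 'a
    by (rule UGamma_line_mat_image[OF assms(1) that UGamma_line_osc_pencil[OF assms(1)]])
  then show "orbit_Gq (ell1 :: ('a^4) set) \<union> orbit_Gq ell2 \<subseteq> {L. UGamma_line L}"
    unfolding orbit_Gq_ell1_ell2[OF assms(2)] by blast
qed

lemma regulus_line_neq_ell2:
  assumes "b \<noteq> 0 \<or> d \<noteq> 0" shows "regulus_line b d \<noteq> ell2"
proof
  assume eq: "regulus_line b d = ell2"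
  have "pt b d 0 0 \<in> regulus_line b d"
    unfolding regulus_line_def by (rule line_through_generators(1))
  then obtain \<alpha> \<beta> where "pt b d 0 0 = \<alpha> *s pt 0 0 0 1 + \<beta> *s pt 0 1 1 0"
    unfolding eq ell2_def in_line_through_iff by blast
  with assms show False
    by simp
qed

lemma ell2_notin_regulus_lines: "ell2 \<notin> regulus_lines"
  unfolding regulus_lines_def using regulus_line_neq_ell2 by fastforce

lemma orbits_disjoint:
  assumes "(2::'a::{field,finite}) = 0" "CARD('a) > 5"
  shows "orbit_Gq (ell1 :: ('a^4) set) \<inter> orbit_Gq ell2 = {}"
proof -
  have "L \<notin> orbit_Gq ell2" if L: "L \<in> orbit_Gq (ell1 :: ('a^4) set)" for L
  proof
    assume "L \<in> orbit_Gq ell2"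
    then obtain A where A: "A \<in> cubic_mats" "L = mat_image A ell2"
      using orbit_Gq_eq[OF assms(2) ell2_def] by blast
    obtain B k where B: "B \<in> cubic_mats" "k \<noteq> 0" "A ** B = smat k (mat 1)" "B ** A = smat k (mat 1)"
      by (rule cubic_mats_inverse[OF A(1)])
    obtain C where C: "C \<in> cubic_mats" "L = mat_image C ell1"
      using L orbit_Gq_eq[OF assms(2) ell1_def] by blast
    have "ell2 = mat_image B L"
      using mat_image_scalar_inverse[OF B(3,2) is_line_osc_pencil[of 1]]
      by (simp add: A(2) ell2_eq_osc_pencil)
    also have "\<dots> = mat_image (C ** B) ell1"
      by (simp add: C(2) mat_image_mat_image)
    also have "\<dots> \<in> orbit_Gq ell1"
      using orbit_Gq_eq[OF assms(2) ell1_def] cubic_mats_mult[OF C(1) B(1)] by blast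
    finally show False
      using ell2_notin_regulus_lines orbit_Gq_ell1[OF assms] by blast
  qed
  then show ?thesis
    by blast
qed

lemma card_orbit_Gq_ell2:
  assumes two: "(2::'a::{field,finite}) = 0" and "CARD('a) > 5"
  shows "card (orbit_Gq (ell2 :: ('a^4) set)) = CARD('a)^2 - 1"
proof -
  have three: "(3::'a) \<noteq> 0"
    using three_eq_one_if_two_eq_zero[OF two] by simp
  have "(CARD('a) + 1) * CARD('a) = card (orbit_Gq (ell1 :: ('a^4) set) \<union> orbit_Gq ell2)"
    using card_UGamma_lines[OF three] UGamma_lines_eq_orbits[OF three assms(2)] by simp
  also have "\<dots> = CARD('a) + 1 + card (orbit_Gq (ell2 :: ('a^4) set))"
    using orbits_disjoint[OF assms] orbit_Gq_ell1[OF assms] card_regulus_lines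
    by (simp add: card_Un_disjoint)
  finally show ?thesis
    by (simp add: power2_eq_square algebra_simps)
qed

lemma cubic_mat_char_two:
  assumes "(2::'a::field) = 0"
  shows "cubic_mat 1 0 c (d::'a) =
    mat4 1 c (c^2) (c^3)  0 d 0 (c^2 * d)  0 0 (d^2) (c * d^2)  0 0 0 (d^3)"
  using three_eq_one_if_two_eq_zero[OF assms] assms by (simp add: cubic_mat_def)

lemma proj_class_cubic_mat_normalize:
  assumes "a \<noteq> 0"
  shows "proj_class (cubic_mat a 0 c d) = proj_class (cubic_mat 1 0 (c/a) (d/a))"
proof -
  have "cubic_mat a 0 c d = smat (a^3) (cubic_mat 1 0 (c/a) (d/a))"
    using assms cubic_mat_homogeneous[of a 1 0 "c/a" "d/a"] by simp
  then show ?thesis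
    by (simp add: proj_class_smat assms)
qed

lemma inj_proj_class_cubic_mat: "inj (\<lambda>(c, d). proj_class (cubic_mat 1 0 c (d::'a::field)))"
proof (rule injI, clarify)
  fix c d c' d' :: 'a
  assume "proj_class (cubic_mat 1 0 c d) = proj_class (cubic_mat 1 0 c' d')"
  then obtain k where "cubic_mat 1 0 c' d' = smat k (cubic_mat 1 0 c d)"
    by (rule proj_class_eqE)
  then have "1 = k" "c' = k*c" "d' = k*d"
    unfolding cubic_mat_def smat_mat4 mat4_eq_iff by simp_all
  then show "c = c' \<and> d = d'"
    by simp
qed

lemma stab_Gq_normal_form:
  assumes "CARD('a::{field,finite}) > 5" "L = line_through u (v::'a^4)"
    and fixes_iff: "\<And>a b c d. a*d-b*c \<noteq> 0 \<Longrightarrow> mat_image (cubic_mat a b c d) L = L \<longleftrightarrow> b = 0 \<and> P a d"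
    and P_scale: "\<And>a d. a \<noteq> 0 \<Longrightarrow> P a d \<longleftrightarrow> P 1 (d/a)"
    and P_nonzero: "\<And>d. P 1 d \<Longrightarrow> d \<noteq> 0"
  shows "stab_Gq L = (\<lambda>(c, d). proj_class (cubic_mat 1 0 c d)) ` (UNIV \<times> {d. P 1 d})"
proof (unfold stab_Gq_eq[OF assms(1,2)], intro set_eqI iffI)
  fix \<phi> assume "\<phi> \<in> proj_class ` {A \<in> cubic_mats. mat_image A L = L}"
  then obtain A where "A \<in> cubic_mats" "mat_image A L = L" and \<phi>: "\<phi> = proj_class A"
    by blast
  then obtain a b c d where A: "A = cubic_mat a b c d" and det: "a*d-b*c \<noteq> 0"
    unfolding cubic_mats_def by blast
  then have "b = 0" "P a d"
    using fixes_iff \<open>mat_image A L = L\<close> by simp_all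
  then have "a \<noteq> 0"
    using det by auto
  then have "\<phi> = proj_class (cubic_mat 1 0 (c/a) (d/a))" "P 1 (d/a)"
    using \<phi> A \<open>b = 0\<close> proj_class_cubic_mat_normalize P_scale \<open>P a d\<close> by blast+
  then show "\<phi> \<in> (\<lambda>(c, d). proj_class (cubic_mat 1 0 c d)) ` (UNIV \<times> {d. P 1 d})"
    by (intro image_eqI[where x="(c/a, d/a)"]) simp_all
next
  fix \<phi> assume "\<phi> \<in> (\<lambda>(c, d). proj_class (cubic_mat 1 0 c d)) ` (UNIV \<times> {d. P 1 d})"
  then obtain c d where \<phi>: "\<phi> = proj_class (cubic_mat 1 0 c d)" and "P 1 d"
    by auto
  then have det: "1*d - 0*c \<noteq> 0"
    using P_nonzero by simp
  then have "cubic_mat 1 0 c d \<in> {A \<in> cubic_mats. mat_image A L = L}"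
    using fixes_iff[OF det] \<open>P 1 d\<close> cubic_matsI[OF det] by simp
  then show "\<phi> \<in> proj_class ` {A \<in> cubic_mats. mat_image A L = L}"
    unfolding \<phi> by (rule imageI)
qed

lemma cubic_mat_fixes_ell1_iff:
  assumes "(2::'a::field) = 0" "a*d-b*c \<noteq> 0"
  shows "mat_image (cubic_mat a b c d) ell1 = ell1 \<longleftrightarrow> b = 0 \<and> d \<noteq> (0::'a)"
proof -
  have ell1: "ell1 = regulus_line 0 (1::'a)"
    unfolding ell1_def regulus_line_def by (rule line_through_commute)
  have "regulus_line b d = regulus_line 0 1 \<longleftrightarrow> b = 0"
    using regulus_line_eqD[of b d 0 1] regulus_line_scale[of d 0 1] assms(2) by auto
  then show ?thesis
    using mat_image_ell1[OF assms] assms(2) ell1 by auto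
qed

lemma in_ell2_iff: "z \<in> ell2 \<longleftrightarrow> z$1 = 0 \<and> z$2 = z$3"
proof
  assume "z$1 = 0 \<and> z$2 = z$3"
  then have "z = z$4 *s pt 0 0 0 1 + z$2 *s pt 0 1 1 0"
    by (simp add: vec4_eq_iff)
  then show "z \<in> ell2"
    unfolding ell2_def in_line_through_iff by blast
qed (auto simp: ell2_def in_line_through_iff)

lemma cubic_mat_fixes_ell2_iff:
  assumes two: "(2::'a::field) = 0" and det: "a*d-b*c \<noteq> 0"
  shows "mat_image (cubic_mat a b c d) ell2 = ell2 \<longleftrightarrow> b = 0 \<and> d = (a::'a)"
proof
  have three: "(3::'a) = 1"
    using three_eq_one_if_two_eq_zero[OF two] .
  assume fixed: "mat_image (cubic_mat a b c d) ell2 = ell2"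
  have "pt 0 0 0 1 v* cubic_mat a b c d \<in> ell2" "pt 0 1 1 0 v* cubic_mat a b c d \<in> ell2"
    using fixed unfolding mat_image_def ell2_def by (auto intro: line_through_generators)
  then have "b = 0" and "a^2*d = a*d^2"
    unfolding in_ell2_iff by (simp_all add: cubic_mat_def two three)
  moreover have "a \<noteq> 0" "d \<noteq> 0"
    using det \<open>b = 0\<close> by auto
  ultimately show "b = 0 \<and> d = a"
    by (simp add: power2_eq_square)
next
  assume "b = 0 \<and> d = a"
  then have "mat_image (cubic_mat a b c d) ell2
      = line_through (pt 0 0 0 (a^3)) (pt 0 (a^3) (a^3) (c^2*a + c*a^2))"
    unfolding ell2_def mat_image_line_through using three_eq_one_if_two_eq_zero[OF two] two
    by (simp add: cubic_mat_def power2_eq_square power3_eq_cube mult_ac)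
  also have "\<dots> = ell2"
    unfolding ell2_def using det \<open>b = 0 \<and> d = a\<close>
    by (intro line_through_eqI[where \<alpha>="a^3" and \<beta>=0 and \<gamma>="c^2*a + c*a^2" and \<delta>="a^3"]) simp_all
  finally show "mat_image (cubic_mat a b c d) ell2 = ell2" .
qed

lemma stab_Gq_ell1:
  assumes "(2::'a::{field,finite}) = 0" "CARD('a) > 5"
  shows "stab_Gq (ell1 :: ('a^4) set) = (\<lambda>(c, d). proj_class (cubic_mat 1 0 c d)) ` (UNIV \<times> {d. d \<noteq> 0})"
  by (rule stab_Gq_normal_form[OF assms(2) ell1_def cubic_mat_fixes_ell1_iff[OF assms(1)]]) simp_all

lemma stab_Gq_ell2:
  assumes "(2::'a::{field,finite}) = 0" "CARD('a) > 5"
  shows "stab_Gq (ell2 :: ('a^4) set) = (\<lambda>(c, d). proj_class (cubic_mat 1 0 c d)) ` (UNIV \<times> {1})"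
proof -
  have "stab_Gq (ell2 :: ('a^4) set) = (\<lambda>(c, d). proj_class (cubic_mat 1 0 c d)) ` (UNIV \<times> {d. d = 1})"
    by (rule stab_Gq_normal_form[OF assms(2) ell2_def cubic_mat_fixes_ell2_iff[OF assms(1)]])
       (auto simp: field_simps)
  then show ?thesis
    by simp
qed

lemma card_stab_Gq_ell1:
  assumes "(2::'a::{field,finite}) = 0" "CARD('a) > 5"
  shows "card (stab_Gq (ell1 :: ('a^4) set)) = CARD('a) * (CARD('a) - 1)"
proof -
  have "{d::'a. d \<noteq> 0} = UNIV - {0}"
    by blast
  then show ?thesis
    unfolding stab_Gq_ell1[OF assms] card_image[OF inj_on_subset[OF inj_proj_class_cubic_mat subset_UNIV]]
    by (simp add: card_cartesian_product card_Diff_singleton)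
qed

lemma card_stab_Gq_ell2:
  assumes "(2::'a::{field,finite}) = 0" "CARD('a) > 5"
  shows "card (stab_Gq (ell2 :: ('a^4) set)) = CARD('a)"
  unfolding stab_Gq_ell2[OF assms] card_image[OF inj_on_subset[OF inj_proj_class_cubic_mat subset_UNIV]]
  by (simp add: card_cartesian_product)

lemma stab_Gq_ell1_matrix:
  assumes "(2::'a::{field,finite}) = 0" "CARD('a) > 5" "\<phi> \<in> stab_Gq (ell1 :: ('a^4) set)"
  shows "\<exists>c d. d \<noteq> 0 \<and> mat4 1 c (c^2) (c^3)  0 d 0 (c^2 * d)  0 0 (d^2) (c * d^2)  0 0 0 (d^3) \<in> \<phi>"
proof -
  obtain c d :: 'a where "d \<noteq> 0" "\<phi> = proj_class (cubic_mat 1 0 c d)"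
    using assms(3) unfolding stab_Gq_ell1[OF assms(1,2)] by auto
  then show ?thesis
    using proj_class_self cubic_mat_char_two[OF assms(1)] by metis
qed

lemma stab_Gq_ell2_matrix:
  assumes "(2::'a::{field,finite}) = 0" "CARD('a) > 5" "\<phi> \<in> stab_Gq (ell2 :: ('a^4) set)"
  shows "\<exists>c. mat4 1 c (c^2) (c^3)  0 1 0 (c^2)  0 0 1 c  0 0 0 1 \<in> \<phi>"
proof -
  obtain c :: 'a where "\<phi> = proj_class (cubic_mat 1 0 c 1)"
    using assms(3) unfolding stab_Gq_ell2[OF assms(1,2)] by auto
  then show ?thesis
    using proj_class_self cubic_mat_char_two[OF assms(1), of c 1] by auto
qed


theorem theorem6p3:
  assumes "even CARD('a::{field,finite})" and "CARD('a) \<ge> 8"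
  shows "{L. UGamma_line L} = orbit_Gq (ell1 :: ('a^4) set) \<union> orbit_Gq ell2
    \<and> orbit_Gq (ell1 :: ('a^4) set) \<inter> orbit_Gq ell2 = {}
    \<and> card (orbit_Gq (ell1 :: ('a^4) set)) = CARD('a) + 1
    \<and> card (orbit_Gq (ell2 :: ('a^4) set)) = CARD('a)^2 - 1
    \<and> orbit_Gq (ell1 :: ('a^4) set) = compl_tangent_regulus
    \<and> card (stab_Gq (ell1 :: ('a^4) set)) = CARD('a) * (CARD('a) - 1)
    \<and> (\<forall>\<phi>\<in>stab_Gq (ell1 :: ('a^4) set). \<exists>c d. d \<noteq> 0 \<and>
          mat4 1 c (c^2) (c^3)  0 d 0 (c^2 * d)  0 0 (d^2) (c * d^2)  0 0 0 (d^3) \<in> \<phi>)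
    \<and> card (stab_Gq (ell2 :: ('a^4) set)) = CARD('a)
    \<and> (\<forall>\<phi>\<in>stab_Gq (ell2 :: ('a^4) set). \<exists>c.
          mat4 1 c (c^2) (c^3)  0 1 0 (c^2)  0 0 1 c  0 0 0 1 \<in> \<phi>)"
proof -
  have two: "(2::'a) = 0"
    using even_card_imp_two_eq_zero[OF assms(1)] .
  then have three: "(3::'a) \<noteq> 0"
    using three_eq_one_if_two_eq_zero by fastforce
  have card: "CARD('a) > 5"
    using assms(2) by simp
  show ?thesis
    using UGamma_lines_eq_orbits[OF three card] orbits_disjoint[OF two card]
      orbit_Gq_ell1[OF two card] card_regulus_lines card_orbit_Gq_ell2[OF two card]
      compl_tangent_regulus_eq[OF two] card_stab_Gq_ell1[OF two card] card_stab_Gq_ell2[OF two card]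
      stab_Gq_ell1_matrix[OF two card] stab_Gq_ell2_matrix[OF two card]
    by simp
qed

end
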